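(* Let $G\rightrightarrows X$ be a locally compact groupoid, $A\to X$ a Banach algebra $G$-bundle, $E\to X$ a Banach $A$-module bundle, $\sigma$ an $A$-valued multiplier for $G$, and $T:s^*E\to t^*E$ an $A$-linear almost $\sigma$-representation. Then $T$ is an invertible morphism of Banach bundles over $G$ (i.e. each $T(g)$ is invertible and $g\mapsto T(g)^{-1}$ defines a morphism $t^*E\to s^*E$ covering $\mathrm{id}_G$), and for all $g\in G$ $$\|T(g)^{-1}\|\le\frac{b(T,tg)}{1-r(T,tg)}.$$
   Context: A locally compact groupoid is a topological groupoid $G\rightrightarrows X$ (source $s$, target $t$, units $1x$, composable pairs $G\times_{s,t}G=\{(g,h):sg=th\}$) whose arrow space is locally compact Hausdorff, equipped with a continuous left Haar system $\{\mu^x\}_{x\in X}$: each $\mu^x$ is a Radon measure on $G$ with support $G^x=t^{-1}(x)$, $\int\varphi(gh)\,d\mu^{sg}(h)=\int\varphi(h)\,d\mu^{tg}(h)$ for $g\in G,\varphi\in C_c(G)$, and $x\mapsto\int\varphi\,d\mu^x$ is continuous. $Gx=t(s^{-1}(x))$ is the orbit of $x$. Banach bundle (Fell): Hausdorff space $E$ with continuous open surjection $p:E\to X$, continuous fiberwise vector operations over $\mathbb R$, continuous norm making fibers Banach spaces, such that nets $e_i$ with $pe_i\to x$, $|e_i|\to0$ converge to $0_x$. Morphisms: continuous fiberwise linear maps; pullbacks $s^*E,t^*E$ over $G$ have fibers $E_{sg}$, $E_{tg}$ at $g$. A Banach algebra bundle $A\to X$ is a Banach bundle with continuous fiberwise multiplications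 and a continuous unit section making fibers unital Banach algebras with $|ab|\le|a||b|$, $|1|=1$; $A^\times$ = invertible elements. A Banach $A$-module bundle is a Banach bundle $E\to X$ with a continuous fiberwise bilinear action $A\times_XE\to E$, $|ae|\le|a||e|$, $1e=e$. A Banach algebra $G$-bundle is a Banach algebra bundle with a continuous left action of $G$ by isometric algebra isomorphisms $A_{sg}\to A_{tg}$, $a\mapsto ga$. An $A$-valued multiplier is a continuous $\sigma$ on $G\times_{s,t}G$ with $\sigma(g,h)\in A^\times_{tg}$ central in $A_{tg}$, $\sigma(g,h)=1$ if $g$ or $h$ is a unit, and $\sigma(g,h)\sigma(gh,k)=g\sigma(h,k)\,\sigma(g,hk)$ for composable $g,h,k$. A pseudorepresentation is any morphism $T:s^*E\to t^*E$ covering $\mathrm{id}_G$, i.e. continuously varying bounded operators $T(g):E_{sg}\to E_{tg}$; it is $A$-linear if $T(g)(ae)=ga\cdot T(g)e$. With $\ell(\sigma,g)=\max\{1,|\sigma(g,g^{-1})^{-1}|\}$, the $\sigma$-defect and $\sigma$-bound along the orbit of $x$ are $r(T,x)=\sup_{y\in Gx}\|\mathrm{id}-T(1y)\|+\sup_{g\in t^{-1}(Gx),\,h\in G^{sg}}\ell(\sigma,g)\|\sigma(g,h)T(gh)-T(g)T(h)\|$, $b(T,x)=\sup_{g\in t^{-1}(Gx)}\ell(\sigma,g)\|T(g)\|$ (possibly infinite). $T$ is an almost $\sigma$-representation if $r(T,x)\le\min\{1/4,\,b(T,x)^{-2}/9\}$ for every $x\in X$. *)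

theory Defs
  imports "HOL-Analysis.Analysis"
begin

record ('g, 'x) groupoid =
  src  :: "'g \<Rightarrow> 'x"
  tgt  :: "'g \<Rightarrow> 'x"
  unit :: "'x \<Rightarrow> 'g"
  gmul :: "'g \<Rightarrow> 'g \<Rightarrow> 'g"
  ginv :: "'g \<Rightarrow> 'g"

definition composable :: "('g, 'x) groupoid \<Rightarrow> ('g \<times> 'g) set" where
  "composable Gr = {(g, h). src Gr g = tgt Gr h}"

definition topological_groupoid ::
  "('g::topological_space, 'x::topological_space) groupoid \<Rightarrow> bool" where
  "topological_groupoid Gr \<longleftrightarrow>
     (\<forall>x. src Gr (unit Gr x) = x \<and> tgt Gr (unit Gr x) = x) \<and>
     (\<forall>g h. src Gr g = tgt Gr h \<longrightarrow>
        src Gr (gmul Gr g h) = src Gr h \<and> tgt Gr (gmul Gr g h) = tgt Gr g) \<and>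
     (\<forall>g h k. src Gr g = tgt Gr h \<and> src Gr h = tgt Gr k \<longrightarrow>
        gmul Gr (gmul Gr g h) k = gmul Gr g (gmul Gr h k)) \<and>
     (\<forall>g. gmul Gr (unit Gr (tgt Gr g)) g = g \<and> gmul Gr g (unit Gr (src Gr g)) = g) \<and>
     (\<forall>g. src Gr (ginv Gr g) = tgt Gr g \<and> tgt Gr (ginv Gr g) = src Gr g \<and>
        gmul Gr g (ginv Gr g) = unit Gr (tgt Gr g) \<and>
        gmul Gr (ginv Gr g) g = unit Gr (src Gr g)) \<and>
     continuous_on UNIV (src Gr) \<and> continuous_on UNIV (tgt Gr) \<and>
     continuous_on UNIV (unit Gr) \<and> continuous_on UNIV (ginv Gr) \<and>
     continuous_on (composable Gr) (\<lambda>(g, h). gmul Gr g h)"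

definition radon_measure :: "'g::topological_space measure \<Rightarrow> bool" where
  "radon_measure M \<longleftrightarrow> sets M = sets borel \<and>
     (\<forall>K. compact K \<longrightarrow> emeasure M K < \<infinity>) \<and>
     (\<forall>B\<in>sets borel. emeasure M B = (INF U\<in>{U. open U \<and> B \<subseteq> U}. emeasure M U)) \<and>
     (\<forall>U. open U \<longrightarrow> emeasure M U = (SUP K\<in>{K. compact K \<and> K \<subseteq> U}. emeasure M K))"

definition msupport :: "'g::topological_space measure \<Rightarrow> 'g set" where
  "msupport M = {g. \<forall>U. open U \<and> g \<in> U \<longrightarrow> emeasure M U \<noteq> 0}"

definition Cc :: "('g::topological_space \<Rightarrow> real) set" where
  "Cc = {\<phi>. continuous_on UNIV \<phi> \<and> compact (closure {g. \<phi> g \<noteq> 0})}"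

text \<open>In the invariance integral the integrand
  \<open>h \<mapsto> \<phi>(gh)\<close> is only meaningful on \<open>G^{sg}\<close> (the support of the measure);
  outside it is set to 0.\<close>
definition haar_system ::
  "('g::topological_space, 'x::topological_space) groupoid \<Rightarrow> ('x \<Rightarrow> 'g measure) \<Rightarrow> bool" where
  "haar_system Gr \<mu> \<longleftrightarrow>
     (\<forall>x. radon_measure (\<mu> x) \<and> msupport (\<mu> x) = {g. tgt Gr g = x}) \<and>
     (\<forall>\<phi>\<in>Cc.
        (\<forall>g. (\<integral>h. (if tgt Gr h = src Gr g then \<phi> (gmul Gr g h) else 0) \<partial>\<mu> (src Gr g))
             = (\<integral>h. \<phi> h \<partial>\<mu> (tgt Gr g))) \<and>
        continuous_on UNIV (\<lambda>x. \<integral>h. \<phi> h \<partial>\<mu> x))"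

definition locally_compact_groupoid ::
  "('g::t2_space, 'x::topological_space) groupoid \<Rightarrow> ('x \<Rightarrow> 'g measure) \<Rightarrow> bool" where
  "locally_compact_groupoid Gr \<mu> \<longleftrightarrow>
     topological_groupoid Gr \<and> locally_compact_space (euclidean :: 'g topology) \<and>
     haar_system Gr \<mu>"

definition orbit :: "('g, 'x) groupoid \<Rightarrow> 'x \<Rightarrow> 'x set" where
  "orbit Gr x = tgt Gr ` {g. src Gr g = x}"

record ('x, 'e) bbundle =
  bproj  :: "'e \<Rightarrow> 'x"
  badd   :: "'e \<Rightarrow> 'e \<Rightarrow> 'e"
  bscale :: "real \<Rightarrow> 'e \<Rightarrow> 'e"
  bzero  :: "'x \<Rightarrow> 'e"
  bnorm  :: "'e \<Rightarrow> real"

definition fib :: "('x, 'e, 'z) bbundle_scheme \<Rightarrow> 'x \<Rightarrow> 'e set" where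
  "fib E x = {e. bproj E e = x}"

definition bsub :: "('x, 'e, 'z) bbundle_scheme \<Rightarrow> 'e \<Rightarrow> 'e \<Rightarrow> 'e" where
  "bsub E a b = badd E a (bscale E (-1) b)"

definition banach_fiber :: "('x, 'e, 'z) bbundle_scheme \<Rightarrow> 'x \<Rightarrow> bool" where
  "banach_fiber E x \<longleftrightarrow>
     bzero E x \<in> fib E x \<and>
     (\<forall>a\<in>fib E x. \<forall>b\<in>fib E x. badd E a b \<in> fib E x) \<and>
     (\<forall>c. \<forall>a\<in>fib E x. bscale E c a \<in> fib E x) \<and>
     (\<forall>a\<in>fib E x. \<forall>b\<in>fib E x. \<forall>c\<in>fib E x. badd E (badd E a b) c = badd E a (badd E b c)) \<and>
     (\<forall>a\<in>fib E x. \<forall>b\<in>fib E x. badd E a b = badd E b a) \<and>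
     (\<forall>a\<in>fib E x. badd E a (bzero E x) = a) \<and>
     (\<forall>a\<in>fib E x. badd E a (bscale E (-1) a) = bzero E x) \<and>
     (\<forall>a\<in>fib E x. bscale E 1 a = a) \<and>
     (\<forall>c d. \<forall>a\<in>fib E x. bscale E c (bscale E d a) = bscale E (c * d) a) \<and>
     (\<forall>c d. \<forall>a\<in>fib E x. bscale E (c + d) a = badd E (bscale E c a) (bscale E d a)) \<and>
     (\<forall>c. \<forall>a\<in>fib E x. \<forall>b\<in>fib E x. bscale E c (badd E a b) = badd E (bscale E c a) (bscale E c b)) \<and>
     (\<forall>a\<in>fib E x. 0 \<le> bnorm E a \<and> (bnorm E a = 0 \<longleftrightarrow> a = bzero E x)) \<and>
     (\<forall>c. \<forall>a\<in>fib E x. bnorm E (bscale E c a) = \<bar>c\<bar> * bnorm E a) \<and>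
     (\<forall>a\<in>fib E x. \<forall>b\<in>fib E x. bnorm E (badd E a b) \<le> bnorm E a + bnorm E b) \<and>
     (\<forall>f::nat \<Rightarrow> 'e. (\<forall>n. f n \<in> fib E x) \<and>
        (\<forall>\<epsilon>>0. \<exists>N. \<forall>m\<ge>N. \<forall>n\<ge>N. bnorm E (bsub E (f m) (f n)) < \<epsilon>) \<longrightarrow>
        (\<exists>l\<in>fib E x. (\<lambda>n. bnorm E (bsub E (f n) l)) \<longlonglongrightarrow> 0))"

text \<open>Fell's Banach bundle; the net condition is stated with filters
  (every net gives a filter and conversely).  Hausdorffness of \<open>E\<close> is
  imposed by the type class \<open>t2_space\<close> in the statement.\<close>
definition banach_bundle ::
  "('x::topological_space, 'e::topological_space, 'z) bbundle_scheme \<Rightarrow> bool" where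
  "banach_bundle E \<longleftrightarrow>
     continuous_on UNIV (bproj E) \<and> (\<forall>U. open U \<longrightarrow> open (bproj E ` U)) \<and>
     surj (bproj E) \<and> (\<forall>x. banach_fiber E x) \<and>
     continuous_on {(a, b). bproj E a = bproj E b} (\<lambda>(a, b). badd E a b) \<and>
     continuous_on UNIV (\<lambda>(c, a). bscale E c a) \<and>
     continuous_on UNIV (bnorm E) \<and>
     (\<forall>x (F :: 'e filter). filterlim (bproj E) (nhds x) F \<and> ((bnorm E) \<longlongrightarrow> 0) F
        \<longrightarrow> ((\<lambda>e. e) \<longlongrightarrow> bzero E x) F)"

definition fib_bounded_linear ::
  "('x, 'e, 'z) bbundle_scheme \<Rightarrow> ('x, 'f, 'w) bbundle_scheme \<Rightarrow> 'x \<Rightarrow> 'x \<Rightarrow> ('e \<Rightarrow> 'f) \<Rightarrow> bool" where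
  "fib_bounded_linear E F x y f \<longleftrightarrow>
     (\<forall>a\<in>fib E x. f a \<in> fib F y) \<and>
     (\<forall>a\<in>fib E x. \<forall>b\<in>fib E x. f (badd E a b) = badd F (f a) (f b)) \<and>
     (\<forall>c. \<forall>a\<in>fib E x. f (bscale E c a) = bscale F c (f a)) \<and>
     (\<exists>K. \<forall>a\<in>fib E x. bnorm F (f a) \<le> K * bnorm E a)"

definition opnorm ::
  "('x, 'e, 'z) bbundle_scheme \<Rightarrow> ('x, 'f, 'w) bbundle_scheme \<Rightarrow> 'x \<Rightarrow> ('e \<Rightarrow> 'f) \<Rightarrow> ereal" where
  "opnorm E F x f = (SUP a\<in>{a\<in>fib E x. bnorm E a \<le> 1}. ereal (bnorm F (f a)))"

definition pullback_morphism ::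
  "('x::topological_space, 'e::topological_space, 'z) bbundle_scheme \<Rightarrow>
   ('x, 'f::topological_space, 'w) bbundle_scheme \<Rightarrow>
   ('g::topological_space \<Rightarrow> 'x) \<Rightarrow> ('g \<Rightarrow> 'x) \<Rightarrow> ('g \<Rightarrow> 'e \<Rightarrow> 'f) \<Rightarrow> bool" where
  "pullback_morphism E F \<alpha> \<beta> T \<longleftrightarrow>
     (\<forall>g. fib_bounded_linear E F (\<alpha> g) (\<beta> g) (T g)) \<and>
     continuous_on {(g, e). bproj E e = \<alpha> g} (\<lambda>(g, e). (g, T g e))"

record ('x, 'a) babundle = "('x, 'a) bbundle" +
  amul :: "'a \<Rightarrow> 'a \<Rightarrow> 'a"
  aone :: "'x \<Rightarrow> 'a"

definition banach_algebra_bundle ::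
  "('x::topological_space, 'a::topological_space) babundle \<Rightarrow> bool" where
  "banach_algebra_bundle A \<longleftrightarrow> banach_bundle A \<and>
     continuous_on {(a, b). bproj A a = bproj A b} (\<lambda>(a, b). amul A a b) \<and>
     continuous_on UNIV (aone A) \<and>
     (\<forall>x. aone A x \<in> fib A x \<and> bnorm A (aone A x) = 1 \<and>
       (\<forall>a\<in>fib A x. \<forall>b\<in>fib A x. amul A a b \<in> fib A x \<and>
          bnorm A (amul A a b) \<le> bnorm A a * bnorm A b) \<and>
       (\<forall>a\<in>fib A x. \<forall>b\<in>fib A x. \<forall>c\<in>fib A x.
          amul A (amul A a b) c = amul A a (amul A b c) \<and>
          amul A (badd A a b) c = badd A (amul A a c) (amul A b c) \<and>
          amul A a (badd A b c) = badd A (amul A a b) (amul A a c)) \<and>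
       (\<forall>r. \<forall>a\<in>fib A x. \<forall>b\<in>fib A x.
          amul A (bscale A r a) b = bscale A r (amul A a b) \<and>
          amul A a (bscale A r b) = bscale A r (amul A a b)) \<and>
       (\<forall>a\<in>fib A x. amul A (aone A x) a = a \<and> amul A a (aone A x) = a))"

definition a_invertible :: "('x, 'a) babundle \<Rightarrow> 'a \<Rightarrow> bool" where
  "a_invertible A a \<longleftrightarrow> (\<exists>b\<in>fib A (bproj A a).
     amul A a b = aone A (bproj A a) \<and> amul A b a = aone A (bproj A a))"

definition ainv :: "('x, 'a) babundle \<Rightarrow> 'a \<Rightarrow> 'a" where
  "ainv A a = (THE b. b \<in> fib A (bproj A a) \<and>
     amul A a b = aone A (bproj A a) \<and> amul A b a = aone A (bproj A a))"

definition algebra_G_bundle ::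
  "('g::topological_space, 'x::topological_space) groupoid \<Rightarrow>
   ('x, 'a::topological_space) babundle \<Rightarrow> ('g \<Rightarrow> 'a \<Rightarrow> 'a) \<Rightarrow> bool" where
  "algebra_G_bundle Gr A act \<longleftrightarrow> banach_algebra_bundle A \<and>
     continuous_on {(g, a). bproj A a = src Gr g} (\<lambda>(g, a). act g a) \<and>
     (\<forall>g. bij_betw (act g) (fib A (src Gr g)) (fib A (tgt Gr g)) \<and>
        act g (aone A (src Gr g)) = aone A (tgt Gr g) \<and>
        (\<forall>a\<in>fib A (src Gr g). bnorm A (act g a) = bnorm A a) \<and>
        (\<forall>r. \<forall>a\<in>fib A (src Gr g). act g (bscale A r a) = bscale A r (act g a)) \<and>
        (\<forall>a\<in>fib A (src Gr g). \<forall>b\<in>fib A (src Gr g).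
           act g (badd A a b) = badd A (act g a) (act g b) \<and>
           act g (amul A a b) = amul A (act g a) (act g b))) \<and>
     (\<forall>a. act (unit Gr (bproj A a)) a = a) \<and>
     (\<forall>g h a. src Gr g = tgt Gr h \<and> bproj A a = src Gr h \<longrightarrow>
        act (gmul Gr g h) a = act g (act h a))"

definition module_bundle ::
  "('x::topological_space, 'a::topological_space) babundle \<Rightarrow>
   ('x, 'e::topological_space) bbundle \<Rightarrow> ('a \<Rightarrow> 'e \<Rightarrow> 'e) \<Rightarrow> bool" where
  "module_bundle A E m \<longleftrightarrow> banach_bundle E \<and>
     continuous_on {(a, e). bproj A a = bproj E e} (\<lambda>(a, e). m a e) \<and>
     (\<forall>x. \<forall>a\<in>fib A x. \<forall>e\<in>fib E x.
        m a e \<in> fib E x \<and> bnorm E (m a e) \<le> bnorm A a * bnorm E e \<and>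
        (\<forall>b\<in>fib A x. m (badd A a b) e = badd E (m a e) (m b e) \<and>
                      m (amul A a b) e = m a (m b e)) \<and>
        (\<forall>e'\<in>fib E x. m a (badd E e e') = badd E (m a e) (m a e')) \<and>
        (\<forall>r. m (bscale A r a) e = bscale E r (m a e) \<and>
             m a (bscale E r e) = bscale E r (m a e))) \<and>
     (\<forall>x. \<forall>e\<in>fib E x. m (aone A x) e = e)"

definition multiplier ::
  "('g::topological_space, 'x::topological_space) groupoid \<Rightarrow>
   ('x, 'a::topological_space) babundle \<Rightarrow> ('g \<Rightarrow> 'a \<Rightarrow> 'a) \<Rightarrow> ('g \<Rightarrow> 'g \<Rightarrow> 'a) \<Rightarrow> bool" where
  "multiplier Gr A act \<sigma> \<longleftrightarrow>
     continuous_on (composable Gr) (\<lambda>(g, h). \<sigma> g h) \<and>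
     (\<forall>g h. src Gr g = tgt Gr h \<longrightarrow>
        \<sigma> g h \<in> fib A (tgt Gr g) \<and> a_invertible A (\<sigma> g h) \<and>
        (\<forall>a\<in>fib A (tgt Gr g). amul A (\<sigma> g h) a = amul A a (\<sigma> g h)) \<and>
        (g \<in> range (unit Gr) \<or> h \<in> range (unit Gr) \<longrightarrow> \<sigma> g h = aone A (tgt Gr g))) \<and>
     (\<forall>g h k. src Gr g = tgt Gr h \<and> src Gr h = tgt Gr k \<longrightarrow>
        amul A (\<sigma> g h) (\<sigma> (gmul Gr g h) k) = amul A (act g (\<sigma> h k)) (\<sigma> g (gmul Gr h k)))"

definition ell :: "('g, 'x) groupoid \<Rightarrow> ('x, 'a) babundle \<Rightarrow> ('g \<Rightarrow> 'g \<Rightarrow> 'a) \<Rightarrow> 'g \<Rightarrow> real" where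
  "ell Gr A \<sigma> g = max 1 (bnorm A (ainv A (\<sigma> g (ginv Gr g))))"

definition defect ::
  "('g, 'x) groupoid \<Rightarrow> ('x, 'a) babundle \<Rightarrow> ('x, 'e) bbundle \<Rightarrow> ('a \<Rightarrow> 'e \<Rightarrow> 'e) \<Rightarrow>
   ('g \<Rightarrow> 'g \<Rightarrow> 'a) \<Rightarrow> ('g \<Rightarrow> 'e \<Rightarrow> 'e) \<Rightarrow> 'x \<Rightarrow> ereal" where
  "defect Gr A E m \<sigma> T x =
     (SUP y\<in>orbit Gr x. opnorm E E y (\<lambda>e. bsub E e (T (unit Gr y) e))) +
     (SUP gh\<in>{(g, h). tgt Gr g \<in> orbit Gr x \<and> tgt Gr h = src Gr g}.
        ereal (ell Gr A \<sigma> (fst gh)) *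
        opnorm E E (src Gr (snd gh))
          (\<lambda>e. bsub E (m (\<sigma> (fst gh) (snd gh)) (T (gmul Gr (fst gh) (snd gh)) e))
                       (T (fst gh) (T (snd gh) e))))"

definition bound ::
  "('g, 'x) groupoid \<Rightarrow> ('x, 'a) babundle \<Rightarrow> ('x, 'e) bbundle \<Rightarrow>
   ('g \<Rightarrow> 'g \<Rightarrow> 'a) \<Rightarrow> ('g \<Rightarrow> 'e \<Rightarrow> 'e) \<Rightarrow> 'x \<Rightarrow> ereal" where
  "bound Gr A E \<sigma> T x =
     (SUP g\<in>{g. tgt Gr g \<in> orbit Gr x}. ereal (ell Gr A \<sigma> g) * opnorm E E (src Gr g) (T g))"

definition A_linear ::
  "('g, 'x) groupoid \<Rightarrow> ('x, 'a) babundle \<Rightarrow> ('x, 'e) bbundle \<Rightarrow> ('g \<Rightarrow> 'a \<Rightarrow> 'a) \<Rightarrow>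
   ('a \<Rightarrow> 'e \<Rightarrow> 'e) \<Rightarrow> ('g \<Rightarrow> 'e \<Rightarrow> 'e) \<Rightarrow> bool" where
  "A_linear Gr A E act m T \<longleftrightarrow>
     (\<forall>g. \<forall>a\<in>fib A (src Gr g). \<forall>e\<in>fib E (src Gr g). T g (m a e) = m (act g a) (T g e))"

definition almost_representation ::
  "('g::topological_space, 'x::topological_space) groupoid \<Rightarrow> ('x, 'a) babundle \<Rightarrow>
   ('x, 'e::topological_space) bbundle \<Rightarrow> ('a \<Rightarrow> 'e \<Rightarrow> 'e) \<Rightarrow>
   ('g \<Rightarrow> 'g \<Rightarrow> 'a) \<Rightarrow> ('g \<Rightarrow> 'e \<Rightarrow> 'e) \<Rightarrow> bool" where
  "almost_representation Gr A E m \<sigma> T \<longleftrightarrow>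
     pullback_morphism E E (src Gr) (tgt Gr) T \<and>
     (\<forall>x. defect Gr A E m \<sigma> T x \<le> 1 / 4 \<and>
          defect Gr A E m \<sigma> T x \<le> inverse ((bound Gr A E \<sigma> T x)\<^sup>2) / 9)"

end

theory Submission
  imports Defs
begin

text \<open>For each arrow \<open>g\<close>, \<open>L(g) = \<sigma>(g\<inverse>, g)\<inverse> T(g\<inverse>)\<close> and
  \<open>R(g) = (g\<inverse>\<cdot>\<sigma>(g, g\<inverse>)\<inverse>) T(g\<inverse>)\<close> are approximate left and right inverses of \<open>T(g)\<close>:
  evaluating the defect \<open>r = r(T, t g) \<le> 1/4\<close> at the units and at the pairs \<open>(g\<inverse>, g)\<close>,
  \<open>(g, g\<inverse>)\<close> gives \<open>\<parallel>1 - L(g) T(g)\<parallel> \<le> r\<close> and \<open>\<parallel>1 - T(g) R(g)\<parallel> \<le> r\<close>. So \<open>T(g)\<close> is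
  injective, and onto by the Banach fixed point theorem applied to \<open>T(g) R(g)\<close>. Moreover
  \<open>(1 - r) \<parallel>T(g)\<inverse> e\<parallel> \<le> \<parallel>L(g) e\<parallel> \<le> ell(\<sigma>, g\<inverse>) \<parallel>T(g\<inverse>)\<parallel> \<parallel>e\<parallel> \<le> b(T, t g) \<parallel>e\<parallel>\<close>.

  Continuity of \<open>(g, e) \<mapsto> T(g)\<inverse> e\<close> at \<open>(g0, e0)\<close>: openness of the bundle projection lets
  one lift \<open>f0 = T(g0)\<inverse> e0\<close> to points \<open>f\<close> over \<open>s g\<close> converging to \<open>f0\<close>; then
  \<open>T(g)\<inverse> e - f = T(g)\<inverse> (e - T(g) f)\<close>, and \<open>\<sigma>(g\<inverse>, g)\<inverse>\<close> stays locally bounded by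
  continuity of multiplication, so the crude bound \<open>\<parallel>T(g)\<inverse>\<parallel> \<le> 2 \<parallel>\<sigma>(g\<inverse>, g)\<inverse>\<parallel> \<parallel>T(g\<inverse>)\<parallel>\<close>
  and Fell's axiom give convergence.\<close>

section \<open>Arithmetic in a Banach fibre\<close>

locale banach_fiber_space =
  fixes E :: "('x, 'e, 'z) bbundle_scheme" and z :: 'x
  assumes banach_fiber: "banach_fiber E z"
begin

lemma zero_mem [simp]: "bzero E z \<in> fib E z"
  using banach_fiber unfolding banach_fiber_def by (elim conjE) blast

lemma add_mem [simp]: "a \<in> fib E z \<Longrightarrow> b \<in> fib E z \<Longrightarrow> badd E a b \<in> fib E z"
  using banach_fiber unfolding banach_fiber_def by (elim conjE) blast

lemma scale_mem [simp]: "a \<in> fib E z \<Longrightarrow> bscale E c a \<in> fib E z"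
  using banach_fiber unfolding banach_fiber_def by (elim conjE) blast

lemma sub_mem [simp]: "a \<in> fib E z \<Longrightarrow> b \<in> fib E z \<Longrightarrow> bsub E a b \<in> fib E z"
  unfolding bsub_def by simp

lemma add_assoc:
  "a \<in> fib E z \<Longrightarrow> b \<in> fib E z \<Longrightarrow> c \<in> fib E z \<Longrightarrow>
    badd E (badd E a b) c = badd E a (badd E b c)"
  using banach_fiber unfolding banach_fiber_def by (elim conjE) blast

lemma add_commute: "a \<in> fib E z \<Longrightarrow> b \<in> fib E z \<Longrightarrow> badd E a b = badd E b a"
  using banach_fiber unfolding banach_fiber_def by (elim conjE) blast

lemma add_left_commute:
  "a \<in> fib E z \<Longrightarrow> b \<in> fib E z \<Longrightarrow> c \<in> fib E z \<Longrightarrow>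
    badd E a (badd E b c) = badd E b (badd E a c)"
  by (metis add_assoc add_commute)

lemma add_zero [simp]: "a \<in> fib E z \<Longrightarrow> badd E a (bzero E z) = a"
  using banach_fiber unfolding banach_fiber_def by (elim conjE) blast

lemma zero_add [simp]: "a \<in> fib E z \<Longrightarrow> badd E (bzero E z) a = a"
  using add_commute add_zero zero_mem by metis

lemma add_neg [simp]: "a \<in> fib E z \<Longrightarrow> badd E a (bscale E (-1) a) = bzero E z"
  using banach_fiber unfolding banach_fiber_def by (elim conjE) blast

lemma neg_add [simp]: "a \<in> fib E z \<Longrightarrow> badd E (bscale E (-1) a) a = bzero E z"
  using add_commute add_neg scale_mem by metis

lemma scale_one [simp]: "a \<in> fib E z \<Longrightarrow> bscale E 1 a = a"
  using banach_fiber unfolding banach_fiber_def by (elim conjE) blast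

lemma scale_scale [simp]: "a \<in> fib E z \<Longrightarrow> bscale E c (bscale E d a) = bscale E (c * d) a"
  using banach_fiber unfolding banach_fiber_def by (elim conjE) blast

lemma scale_add_left: "a \<in> fib E z \<Longrightarrow> bscale E (c + d) a = badd E (bscale E c a) (bscale E d a)"
  using banach_fiber unfolding banach_fiber_def by (elim conjE) blast

lemma scale_add_right:
  "a \<in> fib E z \<Longrightarrow> b \<in> fib E z \<Longrightarrow> bscale E c (badd E a b) = badd E (bscale E c a) (bscale E c b)"
  using banach_fiber unfolding banach_fiber_def by (elim conjE) force

lemma norm_nonneg [simp]: "a \<in> fib E z \<Longrightarrow> 0 \<le> bnorm E a"
  using banach_fiber unfolding banach_fiber_def by (elim conjE) force

lemma norm_eq_zero_iff: "a \<in> fib E z \<Longrightarrow> bnorm E a = 0 \<longleftrightarrow> a = bzero E z"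
  using banach_fiber unfolding banach_fiber_def by (elim conjE) force

lemma norm_zero [simp]: "bnorm E (bzero E z) = 0"
  using norm_eq_zero_iff zero_mem by blast

lemma norm_scale [simp]: "a \<in> fib E z \<Longrightarrow> bnorm E (bscale E c a) = \<bar>c\<bar> * bnorm E a"
  using banach_fiber unfolding banach_fiber_def by (elim conjE) force

lemma norm_triangle:
  "a \<in> fib E z \<Longrightarrow> b \<in> fib E z \<Longrightarrow> bnorm E (badd E a b) \<le> bnorm E a + bnorm E b"
  using banach_fiber unfolding banach_fiber_def by (elim conjE) force

lemma Cauchy_convergent:
  assumes "\<And>n. f n \<in> fib E z"
    and "\<And>\<epsilon>. \<epsilon> > 0 \<Longrightarrow> \<exists>N. \<forall>m\<ge>N. \<forall>n\<ge>N. bnorm E (bsub E (f m) (f n)) < \<epsilon>"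
  shows "\<exists>l\<in>fib E z. (\<lambda>n. bnorm E (bsub E (f n) l)) \<longlonglongrightarrow> 0"
  using banach_fiber assms unfolding banach_fiber_def by metis

lemma neg_add_cancel_left [simp]:
  "a \<in> fib E z \<Longrightarrow> b \<in> fib E z \<Longrightarrow> badd E (bscale E (-1) a) (badd E a b) = b"
  by (metis add_assoc neg_add scale_mem zero_add)

lemma add_neg_cancel_left [simp]:
  "a \<in> fib E z \<Longrightarrow> b \<in> fib E z \<Longrightarrow> badd E a (badd E (bscale E (-1) a) b) = b"
  by (metis add_assoc add_neg scale_mem zero_add)

lemma add_left_cancel:
  assumes "a \<in> fib E z" "b \<in> fib E z" "c \<in> fib E z" "badd E a b = badd E a c"
  shows "b = c"
  by (metis assms neg_add_cancel_left)

lemma scale_zero_left [simp]: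
  assumes "a \<in> fib E z" shows "bscale E 0 a = bzero E z"
proof -
  have "badd E (bscale E 0 a) (bscale E 0 a) = badd E (bscale E 0 a) (bzero E z)"
    using scale_add_left[OF assms, of 0 0] assms by simp
  then show ?thesis using add_left_cancel assms by (metis scale_mem zero_mem)
qed

lemma scale_zero [simp]: "bscale E c (bzero E z) = bzero E z"
proof -
  have "badd E (bscale E c (bzero E z)) (bscale E c (bzero E z)) = badd E (bscale E c (bzero E z)) (bzero E z)"
    using scale_add_right[of "bzero E z" "bzero E z" c] by simp
  then show ?thesis using add_left_cancel by (metis scale_mem zero_mem)
qed

lemma sub_zero [simp]: "a \<in> fib E z \<Longrightarrow> bsub E a (bzero E z) = a"
  unfolding bsub_def by simp

lemma add_sub_cancel [simp]: "a \<in> fib E z \<Longrightarrow> b \<in> fib E z \<Longrightarrow> badd E b (bsub E a b) = a"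
  unfolding bsub_def by (simp add: add_left_commute[of b a])

lemma sub_self [simp]: "a \<in> fib E z \<Longrightarrow> bsub E a a = bzero E z"
  unfolding bsub_def by simp

lemma sub_add_sub:
  assumes "a \<in> fib E z" "b \<in> fib E z" "c \<in> fib E z"
  shows "badd E (bsub E a b) (bsub E b c) = bsub E a c"
  using assms unfolding bsub_def by (simp add: add_assoc)

lemma neg_sub: "a \<in> fib E z \<Longrightarrow> b \<in> fib E z \<Longrightarrow> bscale E (-1) (bsub E a b) = bsub E b a"
  unfolding bsub_def by (simp add: scale_add_right add_commute)

lemma scale_sub:
  "a \<in> fib E z \<Longrightarrow> b \<in> fib E z \<Longrightarrow> bscale E c (bsub E a b) = bsub E (bscale E c a) (bscale E c b)"
  unfolding bsub_def by (simp add: scale_add_right mult.commute)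

lemma neg_distrib:
  "a \<in> fib E z \<Longrightarrow> b \<in> fib E z \<Longrightarrow>
    bscale E (-1) (badd E a b) = badd E (bscale E (-1) a) (bscale E (-1) b)"
  by (rule scale_add_right)

lemma sub_sub_sub:
  assumes "a \<in> fib E z" "b \<in> fib E z" "c \<in> fib E z" "d \<in> fib E z"
  shows "bsub E (bsub E a b) (bsub E c d) = bsub E (bsub E a c) (bsub E b d)"
  using assms unfolding bsub_def by (simp add: neg_distrib add_assoc add_commute add_left_commute)

lemma add_sub_add_left:
  assumes "a \<in> fib E z" "b \<in> fib E z" "c \<in> fib E z"
  shows "bsub E (badd E a b) (badd E a c) = bsub E b c"
proof -
  have "bsub E (badd E a b) (badd E a c) =
      badd E a (badd E b (badd E (bscale E (-1) a) (bscale E (-1) c)))"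
    using assms unfolding bsub_def by (simp add: neg_distrib add_assoc)
  also have "\<dots> = badd E a (badd E (bscale E (-1) a) (badd E b (bscale E (-1) c)))"
    using assms add_left_commute[of b "bscale E (-1) a" "bscale E (-1) c"] by simp
  finally show ?thesis using assms unfolding bsub_def by simp
qed

lemma norm_sub_commute: "a \<in> fib E z \<Longrightarrow> b \<in> fib E z \<Longrightarrow> bnorm E (bsub E a b) = bnorm E (bsub E b a)"
  by (metis neg_sub norm_scale sub_mem abs_neg_one mult_1)

lemma norm_sub_triangle:
  "a \<in> fib E z \<Longrightarrow> b \<in> fib E z \<Longrightarrow> c \<in> fib E z \<Longrightarrow>
    bnorm E (bsub E a c) \<le> bnorm E (bsub E a b) + bnorm E (bsub E b c)"
  by (metis sub_add_sub norm_triangle sub_mem)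

lemma norm_le_norm_sub_add: "a \<in> fib E z \<Longrightarrow> b \<in> fib E z \<Longrightarrow> bnorm E a \<le> bnorm E (bsub E a b) + bnorm E b"
  by (metis add_sub_cancel norm_triangle sub_mem add_commute)

lemma eq_if_sub_eq_zero: "a \<in> fib E z \<Longrightarrow> b \<in> fib E z \<Longrightarrow> bsub E a b = bzero E z \<Longrightarrow> a = b"
  by (metis add_sub_cancel add_zero)

lemma eq_if_norm_sub_eq_zero: "a \<in> fib E z \<Longrightarrow> b \<in> fib E z \<Longrightarrow> bnorm E (bsub E a b) = 0 \<Longrightarrow> a = b"
  using eq_if_sub_eq_zero norm_eq_zero_iff sub_mem by blast

definition fiber_dist :: "'e \<Rightarrow> 'e \<Rightarrow> real" where
  "fiber_dist a b = (if a \<in> fib E z \<and> b \<in> fib E z then bnorm E (bsub E a b) else 0)"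

lemma Metric_space_fiber: "Metric_space (fib E z) fiber_dist"
proof
  show "0 \<le> fiber_dist x y" for x y
    unfolding fiber_dist_def by simp
  show "fiber_dist x y = fiber_dist y x" for x y
    unfolding fiber_dist_def using norm_sub_commute by auto
  show "x \<in> fib E z \<Longrightarrow> y \<in> fib E z \<Longrightarrow> fiber_dist x y = 0 \<longleftrightarrow> x = y" for x y
    unfolding fiber_dist_def using eq_if_norm_sub_eq_zero by auto
  show "x \<in> fib E z \<Longrightarrow> y \<in> fib E z \<Longrightarrow> w \<in> fib E z \<Longrightarrow>
      fiber_dist x w \<le> fiber_dist x y + fiber_dist y w" for x y w
    unfolding fiber_dist_def using norm_sub_triangle by auto
qed

lemma mcomplete_fiber: "Metric_space.mcomplete (fib E z) fiber_dist"
  unfolding Metric_space.mcomplete_def[OF Metric_space_fiber] Metric_space.MCauchy_def[OF Metric_space_fiber]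
proof (intro allI impI)
  fix f :: "nat \<Rightarrow> 'e"
  assume f: "range f \<subseteq> fib E z \<and>
    (\<forall>\<epsilon>>0. \<exists>N. \<forall>n n'. N \<le> n \<longrightarrow> N \<le> n' \<longrightarrow> fiber_dist (f n) (f n') < \<epsilon>)"
  then have fz: "\<And>n. f n \<in> fib E z" by auto
  have "\<exists>N. \<forall>m\<ge>N. \<forall>n\<ge>N. bnorm E (bsub E (f m) (f n)) < \<epsilon>" if "\<epsilon> > 0" for \<epsilon>
  proof -
    from f that obtain N where N: "\<forall>n n'. N \<le> n \<longrightarrow> N \<le> n' \<longrightarrow> fiber_dist (f n) (f n') < \<epsilon>"
      by blast
    show ?thesis
      using N fz by (intro exI[of _ N]) (simp add: fiber_dist_def)
  qed
  from Cauchy_convergent[OF fz this]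
  obtain l where l: "l \<in> fib E z" "(\<lambda>n. bnorm E (bsub E (f n) l)) \<longlonglongrightarrow> 0"
    by blast
  moreover have "(\<lambda>n. fiber_dist (f n) l) = (\<lambda>n. bnorm E (bsub E (f n) l))"
    unfolding fiber_dist_def using fz l by auto
  ultimately show "\<exists>x. limitin (Metric_space.mtopology (fib E z) fiber_dist) f x sequentially"
    using fz by (auto simp: Metric_space.limitin_metric_dist_null[OF Metric_space_fiber])
qed

text \<open>A solution of \<open>P u = e\<close> is a fixed point of the contraction \<open>u \<mapsto> e + (u - P u)\<close>.\<close>
lemma near_identity_surj:
  assumes P_mem: "\<And>u. u \<in> fib E z \<Longrightarrow> P u \<in> fib E z"
    and P_sub: "\<And>u v. u \<in> fib E z \<Longrightarrow> v \<in> fib E z \<Longrightarrow> P (bsub E u v) = bsub E (P u) (P v)"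
    and P_near_id: "\<And>u. u \<in> fib E z \<Longrightarrow> bnorm E (bsub E u (P u)) \<le> q * bnorm E u"
    and "q < 1" and e: "e \<in> fib E z"
  shows "\<exists>u\<in>fib E z. P u = e"
proof -
  interpret Metric_space "fib E z" fiber_dist by (rule Metric_space_fiber)
  define f where "f u = badd E e (bsub E u (P u))" for u
  have f_mem: "f \<in> fib E z \<rightarrow> fib E z" unfolding f_def using P_mem e by auto
  have "fiber_dist (f u) (f v) \<le> q * fiber_dist u v" if "u \<in> fib E z" "v \<in> fib E z" for u v
  proof -
    have "bsub E (f u) (f v) = bsub E (bsub E u v) (bsub E (P u) (P v))"
      unfolding f_def using add_sub_add_left sub_sub_sub that P_mem e by auto
    then show ?thesis
      using P_near_id[of "bsub E u v"] P_sub that f_mem by (auto simp: fiber_dist_def)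
  qed
  then obtain u where u: "u \<in> fib E z" "f u = u"
    using Banach_fixedpoint_thm[OF mcomplete_fiber _ f_mem \<open>q < 1\<close>] e by blast
  then have "badd E (bsub E u (P u)) e = badd E (bsub E u (P u)) (P u)"
    unfolding f_def using P_mem e by (metis add_commute add_sub_cancel sub_mem)
  then have "e = P u" using add_left_cancel P_mem u(1) e by (meson sub_mem)
  then show ?thesis using u by auto
qed

end

section \<open>Banach bundles\<close>

lemma mem_fib_iff: "e \<in> fib E x \<longleftrightarrow> bproj E e = x"
  by (simp add: fib_def)

lemma mem_fib_proj [simp]: "e \<in> fib E (bproj E e)"
  by (simp add: fib_def)

lemma banach_bundle_fiber_space: "banach_bundle E \<Longrightarrow> banach_fiber_space E x"
  unfolding banach_bundle_def banach_fiber_space_def by blast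

context
  fixes E :: "('x::topological_space, 'e::topological_space, 'z) bbundle_scheme"
  assumes bb: "banach_bundle E"
begin

lemma bundle_proj_badd: "bproj E a = bproj E b \<Longrightarrow> bproj E (badd E a b) = bproj E a"
  using banach_fiber_space.add_mem[OF banach_bundle_fiber_space[OF bb], of a "bproj E a" b]
  by (simp add: mem_fib_iff)

lemma bundle_proj_bscale [simp]: "bproj E (bscale E c a) = bproj E a"
  using banach_fiber_space.scale_mem[OF banach_bundle_fiber_space[OF bb], of a "bproj E a"]
  by (simp add: mem_fib_iff)

lemma bundle_proj_bsub: "bproj E a = bproj E b \<Longrightarrow> bproj E (bsub E a b) = bproj E a"
  unfolding bsub_def by (simp add: bundle_proj_badd)

lemma bundle_proj_bzero [simp]: "bproj E (bzero E x) = x"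
  using banach_fiber_space.zero_mem[OF banach_bundle_fiber_space[OF bb]] by (simp add: mem_fib_iff)

lemma bundle_norm_nonneg [simp]: "0 \<le> bnorm E e"
  by (rule banach_fiber_space.norm_nonneg[OF banach_bundle_fiber_space[OF bb] mem_fib_proj])

lemma bundle_norm_bzero [simp]: "bnorm E (bzero E x) = 0"
  using banach_fiber_space.norm_zero[OF banach_bundle_fiber_space[OF bb]] .

lemma bundle_continuous_proj: "continuous_on UNIV (bproj E)"
  using bb unfolding banach_bundle_def by blast

lemma bundle_open_proj: "open U \<Longrightarrow> open (bproj E ` U)"
  using bb unfolding banach_bundle_def by blast

lemma bundle_continuous_norm: "continuous_on UNIV (bnorm E)"
  using bb unfolding banach_bundle_def by blast

lemma bundle_tendsto_proj: "(f \<longlongrightarrow> f0) F \<Longrightarrow> ((\<lambda>i. bproj E (f i)) \<longlongrightarrow> bproj E f0) F"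
  using continuous_on_tendsto_compose[OF bundle_continuous_proj] by fastforce

lemma bundle_tendsto_norm: "(f \<longlongrightarrow> f0) F \<Longrightarrow> ((\<lambda>i. bnorm E (f i)) \<longlongrightarrow> bnorm E f0) F"
  using continuous_on_tendsto_compose[OF bundle_continuous_norm] by fastforce

lemma bundle_tendsto_badd:
  assumes "(u \<longlongrightarrow> u0) F" "(v \<longlongrightarrow> v0) F"
    and "eventually (\<lambda>i. bproj E (u i) = bproj E (v i)) F" "bproj E u0 = bproj E v0"
  shows "((\<lambda>i. badd E (u i) (v i)) \<longlongrightarrow> badd E u0 v0) F"
proof -
  have "continuous_on {(a, b). bproj E a = bproj E b} (\<lambda>(a, b). badd E a b)"
    using bb unfolding banach_bundle_def by blast
  from continuous_on_tendsto_compose[OF this, of "\<lambda>i. (u i, v i)" "(u0, v0)"]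
  show ?thesis using assms by (auto intro: tendsto_Pair)
qed

lemma bundle_tendsto_bscale:
  assumes "(u \<longlongrightarrow> u0) F"
  shows "((\<lambda>i. bscale E c (u i)) \<longlongrightarrow> bscale E c u0) F"
proof -
  have "continuous_on UNIV (\<lambda>(c, a). bscale E c a)"
    using bb unfolding banach_bundle_def by blast
  from continuous_on_tendsto_compose[OF this, of "\<lambda>i. (c, u i)" "(c, u0)"]
  show ?thesis using assms by (simp add: tendsto_Pair)
qed

lemma bundle_tendsto_bsub:
  assumes "(u \<longlongrightarrow> u0) F" "(v \<longlongrightarrow> v0) F"
    and "eventually (\<lambda>i. bproj E (u i) = bproj E (v i)) F" "bproj E u0 = bproj E v0"
  shows "((\<lambda>i. bsub E (u i) (v i)) \<longlongrightarrow> bsub E u0 v0) F"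
  unfolding bsub_def using assms by (intro bundle_tendsto_badd bundle_tendsto_bscale) auto

lemma bundle_tendsto_bzero:
  assumes "((\<lambda>i. bproj E (u i)) \<longlongrightarrow> x) F" "((\<lambda>i. bnorm E (u i)) \<longlongrightarrow> 0) F"
  shows "(u \<longlongrightarrow> bzero E x) F"
proof -
  have "filterlim (bproj E) (nhds x) (filtermap u F)" "((bnorm E) \<longlongrightarrow> 0) (filtermap u F)"
    using assms by (simp_all add: filterlim_filtermap)
  then have "((\<lambda>e. e) \<longlongrightarrow> bzero E x) (filtermap u F)"
    using bb unfolding banach_bundle_def by blast
  then show ?thesis by (simp add: filterlim_filtermap)
qed

lemma bundle_norm_sub_tendsto_0:
  assumes "(u \<longlongrightarrow> w) F" "(v \<longlongrightarrow> w) F" "eventually (\<lambda>i. bproj E (u i) = bproj E (v i)) F"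
  shows "((\<lambda>i. bnorm E (bsub E (u i) (v i))) \<longlongrightarrow> 0) F"
proof -
  interpret banach_fiber_space E "bproj E w" by (rule banach_bundle_fiber_space[OF bb])
  have "((\<lambda>i. bnorm E (bsub E (u i) (v i))) \<longlongrightarrow> bnorm E (bsub E w w)) F"
    using assms by (intro bundle_tendsto_norm bundle_tendsto_bsub) auto
  then show ?thesis by simp
qed

lemma bundle_tendsto_of_norm_sub:
  assumes f: "(f \<longlongrightarrow> f0) F" and same_fib: "eventually (\<lambda>i. bproj E (x i) = bproj E (f i)) F"
    and norm_sub: "((\<lambda>i. bnorm E (bsub E (x i) (f i))) \<longlongrightarrow> 0) F"
  shows "(x \<longlongrightarrow> f0) F"
proof -
  have proj_d: "eventually (\<lambda>i. bproj E (bsub E (x i) (f i)) = bproj E (f i)) F"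
    using same_fib by eventually_elim (simp add: bundle_proj_bsub)
  have "((\<lambda>i. bproj E (bsub E (x i) (f i))) \<longlongrightarrow> bproj E f0) F"
    using tendsto_cong[OF proj_d] bundle_tendsto_proj[OF f] by simp
  then have d: "((\<lambda>i. bsub E (x i) (f i)) \<longlongrightarrow> bzero E (bproj E f0)) F"
    by (rule bundle_tendsto_bzero[OF _ norm_sub])
  have "((\<lambda>i. badd E (f i) (bsub E (x i) (f i))) \<longlongrightarrow> badd E f0 (bzero E (bproj E f0))) F"
    using proj_d by (intro bundle_tendsto_badd[OF f d]) (auto elim: eventually_mono)
  moreover have "badd E f0 (bzero E (bproj E f0)) = f0"
    using banach_fiber_space.add_zero[OF banach_bundle_fiber_space[OF bb]] by simp
  moreover have "eventually (\<lambda>i. badd E (f i) (bsub E (x i) (f i)) = x i) F"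
    using same_fib
  proof eventually_elim
    case (elim i)
    interpret banach_fiber_space E "bproj E (x i)" by (rule banach_bundle_fiber_space[OF bb])
    show ?case using elim by (simp add: mem_fib_iff)
  qed
  ultimately show ?thesis using tendsto_cong[of "\<lambda>i. badd E (f i) (bsub E (x i) (f i))" x F] by simp
qed

end

text \<open>Pairs \<open>(i, y)\<close> with \<open>y\<close> over \<open>\<phi> i\<close> and near \<open>b0\<close>. As \<open>bproj\<close> is open, an event
  in \<open>i\<close> alone that holds eventually here holds eventually in \<open>F\<close> once \<open>\<phi> \<longrightarrow> bproj b0\<close>
  (\<open>eventually_fiber_lift_filter_fstD\<close>); this replaces passing to lifted subnets.\<close>
definition fiber_lift_filter ::
  "('x, 'e, 'z) bbundle_scheme \<Rightarrow> 'i filter \<Rightarrow> ('i \<Rightarrow> 'x) \<Rightarrow> 'e::topological_space \<Rightarrow> ('i \<times> 'e) filter"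
where
  "fiber_lift_filter E F \<phi> b0 = (INF SW\<in>{(S, W). eventually (\<lambda>i. i \<in> S) F \<and> open W \<and> b0 \<in> W}.
      principal {(i, y). i \<in> fst SW \<and> y \<in> snd SW \<and> bproj E y = \<phi> i})"

lemma eventually_fiber_lift_filter:
  "eventually P (fiber_lift_filter E F \<phi> b0) \<longleftrightarrow>
     (\<exists>S W. eventually (\<lambda>i. i \<in> S) F \<and> open W \<and> b0 \<in> W \<and>
        (\<forall>i y. i \<in> S \<and> y \<in> W \<and> bproj E y = \<phi> i \<longrightarrow> P (i, y)))"
proof -
  let ?B = "{(S, W). eventually (\<lambda>i. i \<in> S) F \<and> open W \<and> b0 \<in> W}"
  let ?P = "\<lambda>SW. principal {(i, y). i \<in> fst SW \<and> y \<in> snd SW \<and> bproj E y = \<phi> i}"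
  have "eventually P (fiber_lift_filter E F \<phi> b0) \<longleftrightarrow> (\<exists>SW\<in>?B. eventually P (?P SW))"
    unfolding fiber_lift_filter_def
  proof (rule eventually_INF_base)
    have "(UNIV, UNIV) \<in> ?B" by simp
    then show "?B \<noteq> {}" by blast
  next
    fix a b assume "a \<in> ?B" "b \<in> ?B"
    then show "\<exists>c\<in>?B. ?P c \<le> inf (?P a) (?P b)"
      by (intro bexI[of _ "(fst a \<inter> fst b, snd a \<inter> snd b)"])
        (auto simp: inf_principal eventually_conj_iff)
  qed
  then show ?thesis by (auto simp: eventually_principal)
qed

lemma eventually_fiber_lift_filter_fst:
  "eventually P F \<Longrightarrow> eventually (\<lambda>q. P (fst q)) (fiber_lift_filter E F \<phi> b0)"
  unfolding eventually_fiber_lift_filter by (rule exI[of _ "{i. P i}"], rule exI[of _ UNIV]) auto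

lemma tendsto_fiber_lift_filter_fst:
  "(h \<longlongrightarrow> l) F \<Longrightarrow> ((\<lambda>q. h (fst q)) \<longlongrightarrow> l) (fiber_lift_filter E F \<phi> b0)"
  unfolding tendsto_def using eventually_fiber_lift_filter_fst by blast

lemma tendsto_fiber_lift_filter_snd: "(snd \<longlongrightarrow> b0) (fiber_lift_filter E F \<phi> b0)"
  unfolding tendsto_def eventually_fiber_lift_filter
proof (intro allI impI)
  fix W assume "open W" "b0 \<in> W"
  then show "\<exists>S W'. eventually (\<lambda>i. i \<in> S) F \<and> open W' \<and> b0 \<in> W' \<and>
      (\<forall>i y. i \<in> S \<and> y \<in> W' \<and> bproj E y = \<phi> i \<longrightarrow> snd (i, y) \<in> W)"
    by (intro exI[of _ UNIV] exI[of _ W]) auto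
qed

lemma eventually_fiber_lift_filter_proj:
  "eventually (\<lambda>q. bproj E (snd q) = \<phi> (fst q)) (fiber_lift_filter E F \<phi> b0)"
  unfolding eventually_fiber_lift_filter by (rule exI[of _ UNIV], rule exI[of _ UNIV]) auto

lemma eventually_fiber_lift_filter_fstD:
  assumes "banach_bundle E" and "(\<phi> \<longlongrightarrow> bproj E b0) F"
    and "eventually (\<lambda>q. Q (fst q)) (fiber_lift_filter E F \<phi> b0)"
  shows "eventually Q F"
proof -
  from assms(3) obtain S W where SW: "eventually (\<lambda>i. i \<in> S) F" "open W" "b0 \<in> W"
    and Q: "\<And>i y. i \<in> S \<Longrightarrow> y \<in> W \<Longrightarrow> bproj E y = \<phi> i \<Longrightarrow> Q i"
    unfolding eventually_fiber_lift_filter by auto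
  have "eventually (\<lambda>i. \<phi> i \<in> bproj E ` W) F"
    using bundle_open_proj[OF assms(1) SW(2)] SW(3) assms(2) by (auto simp: tendsto_def)
  with SW(1) show ?thesis
    by eventually_elim (use Q in auto)
qed

section \<open>Topological groupoids\<close>

context
  fixes Gr :: "('g::topological_space, 'x::topological_space) groupoid"
  assumes groupoid: "topological_groupoid Gr"
begin

lemma src_unit [simp]: "src Gr (unit Gr x) = x"
  using groupoid unfolding topological_groupoid_def by blast

lemma tgt_unit [simp]: "tgt Gr (unit Gr x) = x"
  using groupoid unfolding topological_groupoid_def by blast

lemma src_gmul: "src Gr g = tgt Gr h \<Longrightarrow> src Gr (gmul Gr g h) = src Gr h"
  using groupoid unfolding topological_groupoid_def by blast

lemma tgt_gmul: "src Gr g = tgt Gr h \<Longrightarrow> tgt Gr (gmul Gr g h) = tgt Gr g"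
  using groupoid unfolding topological_groupoid_def by blast

lemma src_ginv [simp]: "src Gr (ginv Gr g) = tgt Gr g"
  using groupoid unfolding topological_groupoid_def by blast

lemma tgt_ginv [simp]: "tgt Gr (ginv Gr g) = src Gr g"
  using groupoid unfolding topological_groupoid_def by blast

lemma gmul_ginv: "gmul Gr g (ginv Gr g) = unit Gr (tgt Gr g)"
  using groupoid unfolding topological_groupoid_def by blast

lemma ginv_gmul: "gmul Gr (ginv Gr g) g = unit Gr (src Gr g)"
  using groupoid unfolding topological_groupoid_def by blast

lemma gmul_assoc:
  "src Gr g = tgt Gr h \<Longrightarrow> src Gr h = tgt Gr k \<Longrightarrow> gmul Gr (gmul Gr g h) k = gmul Gr g (gmul Gr h k)"
  using groupoid unfolding topological_groupoid_def by blast

lemma unit_gmul: "gmul Gr (unit Gr (tgt Gr g)) g = g"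
  using groupoid unfolding topological_groupoid_def by blast

lemma gmul_unit: "gmul Gr g (unit Gr (src Gr g)) = g"
  using groupoid unfolding topological_groupoid_def by blast

lemma ginv_ginv [simp]: "ginv Gr (ginv Gr g) = g"
proof -
  let ?h = "ginv Gr g"
  have "ginv Gr ?h = gmul Gr (ginv Gr ?h) (gmul Gr ?h g)"
    using gmul_unit[of "ginv Gr ?h"] ginv_gmul[of g] by simp
  also have "\<dots> = gmul Gr (gmul Gr (ginv Gr ?h) ?h) g"
    using gmul_assoc[of "ginv Gr ?h" ?h g] by simp
  also have "\<dots> = g"
    using ginv_gmul[of ?h] unit_gmul[of g] by simp
  finally show ?thesis .
qed

lemma src_in_orbit_tgt: "src Gr g \<in> orbit Gr (tgt Gr g)"
  unfolding orbit_def by (rule image_eqI[of _ _ "ginv Gr g"]) auto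

lemma in_orbit_self [simp]: "x \<in> orbit Gr x"
  unfolding orbit_def by (rule image_eqI[of _ _ "unit Gr x"]) auto

lemma tendsto_src: "(f \<longlongrightarrow> g0) F \<Longrightarrow> ((\<lambda>i. src Gr (f i)) \<longlongrightarrow> src Gr g0) F"
  using groupoid continuous_on_tendsto_compose[of UNIV "src Gr"]
  unfolding topological_groupoid_def by fastforce

lemma tendsto_tgt: "(f \<longlongrightarrow> g0) F \<Longrightarrow> ((\<lambda>i. tgt Gr (f i)) \<longlongrightarrow> tgt Gr g0) F"
  using groupoid continuous_on_tendsto_compose[of UNIV "tgt Gr"]
  unfolding topological_groupoid_def by fastforce

lemma tendsto_ginv: "(f \<longlongrightarrow> g0) F \<Longrightarrow> ((\<lambda>i. ginv Gr (f i)) \<longlongrightarrow> ginv Gr g0) F"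
  using groupoid continuous_on_tendsto_compose[of UNIV "ginv Gr"]
  unfolding topological_groupoid_def by fastforce

end

section \<open>Banach algebra bundles and module bundles\<close>

context
  fixes A :: "('x::topological_space, 'a::topological_space) babundle"
  assumes algebra: "banach_algebra_bundle A"
begin

lemma algebra_banach_bundle: "banach_bundle A"
  using algebra unfolding banach_algebra_bundle_def by blast

lemma aone_mem [simp]: "aone A x \<in> fib A x"
  using algebra unfolding banach_algebra_bundle_def by blast

lemma amul_mem: "a \<in> fib A x \<Longrightarrow> b \<in> fib A x \<Longrightarrow> amul A a b \<in> fib A x"
  using algebra unfolding banach_algebra_bundle_def by blast

lemma norm_amul_le: "a \<in> fib A x \<Longrightarrow> b \<in> fib A x \<Longrightarrow> bnorm A (amul A a b) \<le> bnorm A a * bnorm A b"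
  using algebra unfolding banach_algebra_bundle_def by blast

lemma amul_assoc:
  "a \<in> fib A x \<Longrightarrow> b \<in> fib A x \<Longrightarrow> c \<in> fib A x \<Longrightarrow> amul A (amul A a b) c = amul A a (amul A b c)"
  using algebra unfolding banach_algebra_bundle_def by blast

lemma amul_bsub_right:
  assumes "a \<in> fib A x" "b \<in> fib A x" "c \<in> fib A x"
  shows "amul A a (bsub A b c) = bsub A (amul A a b) (amul A a c)"
proof -
  interpret banach_fiber_space A x by (rule banach_bundle_fiber_space[OF algebra_banach_bundle])
  have "\<forall>r. amul A a (bscale A r c) = bscale A r (amul A a c)"
    "amul A a (badd A b (bscale A (-1) c)) = badd A (amul A a b) (amul A a (bscale A (-1) c))"
    using algebra assms unfolding banach_algebra_bundle_def by simp_all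
  then show ?thesis unfolding bsub_def by simp
qed

lemma aone_amul: "a \<in> fib A x \<Longrightarrow> amul A (aone A x) a = a"
  using algebra unfolding banach_algebra_bundle_def by blast

lemma amul_aone: "a \<in> fib A x \<Longrightarrow> amul A a (aone A x) = a"
  using algebra unfolding banach_algebra_bundle_def by blast

lemma ainv_inverse:
  assumes "a_invertible A a"
  shows "ainv A a \<in> fib A (bproj A a)" "amul A a (ainv A a) = aone A (bproj A a)"
    "amul A (ainv A a) a = aone A (bproj A a)"
proof -
  let ?x = "bproj A a"
  obtain b where b: "b \<in> fib A ?x" "amul A a b = aone A ?x" "amul A b a = aone A ?x"
    using assms unfolding a_invertible_def by blast
  have "c = b" if c: "c \<in> fib A ?x" "amul A a c = aone A ?x" "amul A c a = aone A ?x" for c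
  proof -
    have "c = amul A c (amul A a b)" using c b amul_aone by simp
    also have "\<dots> = amul A (amul A c a) b" using amul_assoc[OF c(1) _ b(1)] by simp
    also have "\<dots> = b" using c b aone_amul by simp
    finally show ?thesis .
  qed
  then have "ainv A a = b"
    unfolding ainv_def using b by blast
  then show "ainv A a \<in> fib A ?x" "amul A a (ainv A a) = aone A ?x" "amul A (ainv A a) a = aone A ?x"
    using b by auto
qed

text \<open>From \<open>a\<inverse> - y = a\<inverse>(1 - a y)\<close>: \<open>\<parallel>a\<inverse>\<parallel> \<le> \<parallel>a\<inverse>\<parallel>/2 + \<parallel>y\<parallel>\<close>.\<close>
lemma norm_ainv_le_of_near_right_inverse:
  assumes inv: "a_invertible A a" and y: "y \<in> fib A (bproj A a)"
    and near: "bnorm A (bsub A (aone A (bproj A a)) (amul A a y)) \<le> 1 / 2"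
  shows "bnorm A (ainv A a) \<le> 2 * bnorm A y"
proof -
  let ?x = "bproj A a" and ?b = "ainv A a"
  interpret banach_fiber_space A ?x by (rule banach_bundle_fiber_space[OF algebra_banach_bundle])
  have b: "?b \<in> fib A ?x" "amul A ?b a = aone A ?x" using ainv_inverse[OF inv] by auto
  have ay: "amul A a y \<in> fib A ?x" using amul_mem y by simp
  have "bsub A ?b y = amul A ?b (bsub A (aone A ?x) (amul A a y))"
    using amul_bsub_right[OF b(1) aone_mem ay] amul_aone[OF b(1)] amul_assoc[OF b(1) mem_fib_proj y] b(2)
      aone_amul[OF y] by simp
  then have "bnorm A (bsub A ?b y) \<le> bnorm A ?b * (1 / 2)"
    using norm_amul_le[OF b(1), of "bsub A (aone A ?x) (amul A a y)"] ay near
    by (smt (verit, best) aone_mem b(1) mult_left_mono norm_nonneg sub_mem)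
  then show ?thesis
    using norm_le_norm_sub_add[OF b(1) y] by simp
qed

lemma tendsto_amul:
  assumes "(u \<longlongrightarrow> u0) F" "(v \<longlongrightarrow> v0) F"
    and "eventually (\<lambda>i. bproj A (u i) = bproj A (v i)) F" "bproj A u0 = bproj A v0"
  shows "((\<lambda>i. amul A (u i) (v i)) \<longlongrightarrow> amul A u0 v0) F"
proof -
  have "continuous_on {(a, b). bproj A a = bproj A b} (\<lambda>(a, b). amul A a b)"
    using algebra unfolding banach_algebra_bundle_def by blast
  from continuous_on_tendsto_compose[OF this, of "\<lambda>i. (u i, v i)" "(u0, v0)"]
  show ?thesis using assms by (auto intro: tendsto_Pair)
qed

lemma tendsto_aone: "(f \<longlongrightarrow> x) F \<Longrightarrow> ((\<lambda>i. aone A (f i)) \<longlongrightarrow> aone A x) F"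
  using algebra continuous_on_tendsto_compose[of UNIV "aone A"]
  unfolding banach_algebra_bundle_def by fastforce

text \<open>Inversion is locally bounded: near \<open>a0\<close>, the fixed element \<open>a0\<inverse>\<close>, lifted to the
  fibre of \<open>a i\<close>, is an approximate right inverse of \<open>a i\<close>.\<close>
lemma ainv_eventually_bounded:
  assumes lim: "(a \<longlongrightarrow> a0) F" and inv0: "a_invertible A a0"
    and inv: "eventually (\<lambda>i. a_invertible A (a i)) F"
  shows "\<exists>C. eventually (\<lambda>i. bnorm A (ainv A (a i)) \<le> C) F"
proof -
  have bb: "banach_bundle A" by (rule algebra_banach_bundle)
  let ?b0 = "ainv A a0"
  have b0: "bproj A ?b0 = bproj A a0" "amul A a0 ?b0 = aone A (bproj A a0)"
    using ainv_inverse[OF inv0] by (auto simp: mem_fib_iff)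
  let ?\<phi> = "\<lambda>i. bproj A (a i)"
  have \<phi>: "(?\<phi> \<longlongrightarrow> bproj A ?b0) F" using bundle_tendsto_proj[OF bb lim] b0 by simp
  let ?G = "fiber_lift_filter A F ?\<phi> ?b0"
  have a_G: "((\<lambda>q. a (fst q)) \<longlongrightarrow> a0) ?G" by (rule tendsto_fiber_lift_filter_fst[OF lim])
  have y_G: "(snd \<longlongrightarrow> ?b0) ?G" by (rule tendsto_fiber_lift_filter_snd)
  have proj_y: "eventually (\<lambda>q. bproj A (snd q) = bproj A (a (fst q))) ?G"
    by (rule eventually_fiber_lift_filter_proj)
  have "((\<lambda>q. amul A (a (fst q)) (snd q)) \<longlongrightarrow> amul A a0 ?b0) ?G"
    using proj_y b0 by (intro tendsto_amul[OF a_G y_G]) (auto elim: eventually_mono)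
  moreover have "((\<lambda>q. aone A (bproj A (a (fst q)))) \<longlongrightarrow> aone A (bproj A a0)) ?G"
    by (intro tendsto_aone bundle_tendsto_proj[OF bb a_G])
  moreover have "eventually (\<lambda>q. bproj A (aone A (bproj A (a (fst q)))) =
      bproj A (amul A (a (fst q)) (snd q))) ?G"
    using proj_y by eventually_elim (metis amul_mem aone_mem mem_fib_iff mem_fib_proj)
  ultimately have "((\<lambda>q. bnorm A (bsub A (aone A (bproj A (a (fst q)))) (amul A (a (fst q)) (snd q))))
      \<longlongrightarrow> 0) ?G"
    using b0 by (intro bundle_norm_sub_tendsto_0[OF bb]) auto
  then have near: "eventually (\<lambda>q.
      bnorm A (bsub A (aone A (bproj A (a (fst q)))) (amul A (a (fst q)) (snd q))) < 1 / 2) ?G"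
    by (rule order_tendstoD) simp
  have "((\<lambda>q. bnorm A (snd q)) \<longlongrightarrow> bnorm A ?b0) ?G" by (rule bundle_tendsto_norm[OF bb y_G])
  then have small: "eventually (\<lambda>q. bnorm A (snd q) < bnorm A ?b0 + 1) ?G"
    by (rule order_tendstoD) simp
  have "eventually (\<lambda>q. bnorm A (ainv A (a (fst q))) \<le> 2 * (bnorm A ?b0 + 1)) ?G"
    using near small eventually_fiber_lift_filter_fst[OF inv] proj_y
  proof eventually_elim
    case (elim q)
    then have "bnorm A (ainv A (a (fst q))) \<le> 2 * bnorm A (snd q)"
      by (intro norm_ainv_le_of_near_right_inverse) (auto simp: mem_fib_iff)
    then show ?case using elim(2) by simp
  qed
  then have "eventually (\<lambda>i. bnorm A (ainv A (a i)) \<le> 2 * (bnorm A ?b0 + 1)) F"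
    by (rule eventually_fiber_lift_filter_fstD[OF bb \<phi>])
  then show ?thesis by blast
qed

end

context
  fixes A :: "('x::topological_space, 'a::topological_space) babundle"
    and E :: "('x, 'e::topological_space) bbundle" and m :: "'a \<Rightarrow> 'e \<Rightarrow> 'e"
  assumes module: "module_bundle A E m"
begin

lemma module_banach_bundle: "banach_bundle E"
  using module unfolding module_bundle_def by blast

lemma module_mem: "a \<in> fib A x \<Longrightarrow> e \<in> fib E x \<Longrightarrow> m a e \<in> fib E x"
  using module unfolding module_bundle_def by blast

lemma module_norm_le: "a \<in> fib A x \<Longrightarrow> e \<in> fib E x \<Longrightarrow> bnorm E (m a e) \<le> bnorm A a * bnorm E e"
  using module unfolding module_bundle_def by blast

lemma module_amul: "a \<in> fib A x \<Longrightarrow> b \<in> fib A x \<Longrightarrow> e \<in> fib E x \<Longrightarrow> m (amul A a b) e = m a (m b e)"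
  using module unfolding module_bundle_def by blast

lemma module_aone: "e \<in> fib E x \<Longrightarrow> m (aone A x) e = e"
  using module unfolding module_bundle_def by blast

lemma module_bscale: "a \<in> fib A x \<Longrightarrow> e \<in> fib E x \<Longrightarrow> m a (bscale E r e) = bscale E r (m a e)"
  using module unfolding module_bundle_def by blast

lemma module_bsub:
  assumes "a \<in> fib A x" "e \<in> fib E x" "e' \<in> fib E x"
  shows "m a (bsub E e e') = bsub E (m a e) (m a e')"
proof -
  interpret banach_fiber_space E x by (rule banach_bundle_fiber_space[OF module_banach_bundle])
  have "m a (badd E e (bscale E (-1) e')) = badd E (m a e) (m a (bscale E (-1) e'))"
    using module assms unfolding module_bundle_def by simp
  then show ?thesis unfolding bsub_def using assms by (simp add: module_bscale)
qed

lemma module_bzero: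
  assumes "a \<in> fib A x" shows "m a (bzero E x) = bzero E x"
proof -
  interpret banach_fiber_space E x by (rule banach_bundle_fiber_space[OF module_banach_bundle])
  show ?thesis using module_bsub[OF assms zero_mem zero_mem] module_mem[OF assms zero_mem] by simp
qed

lemma norm_sub_module_left_inverse_le:
  assumes f: "f \<in> fib E x" and u: "u \<in> fib E x" and w: "w \<in> fib E x"
    and s: "s \<in> fib A x" and c: "c \<in> fib A x" and cs: "amul A c s = aone A x"
    and fu: "bnorm E (bsub E f u) \<le> a1 * bnorm E f"
    and suw: "bnorm E (bsub E (m s u) w) \<le> a2 * bnorm E f"
    and c_le: "bnorm A c \<le> l" and "0 \<le> l"
  shows "bnorm E (bsub E f (m c w)) \<le> (a1 + l * a2) * bnorm E f"
proof -
  interpret banach_fiber_space E x by (rule banach_bundle_fiber_space[OF module_banach_bundle])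
  have su: "m s u \<in> fib E x" using module_mem[OF s u] .
  have "m c (m s u) = u" using module_amul[OF c s u, symmetric] cs module_aone[OF u] by simp
  then have "bsub E f (m c w) = badd E (bsub E f u) (m c (bsub E (m s u) w))"
    using module_bsub[OF c su w] sub_add_sub[OF f u module_mem[OF c w]] by simp
  moreover have "bnorm E (m c (bsub E (m s u) w)) \<le> l * (a2 * bnorm E f)"
  proof -
    have "bnorm E (m c (bsub E (m s u) w)) \<le> bnorm A c * bnorm E (bsub E (m s u) w)"
      using module_norm_le[OF c, of "bsub E (m s u) w"] su w by simp
    also have "\<dots> \<le> l * bnorm E (bsub E (m s u) w)"
      using c_le su w by (intro mult_right_mono) auto
    also have "\<dots> \<le> l * (a2 * bnorm E f)"
      using suw \<open>0 \<le> l\<close> by (rule mult_left_mono)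
    finally show ?thesis .
  qed
  ultimately show ?thesis
    using norm_triangle[of "bsub E f u" "m c (bsub E (m s u) w)"] fu f u c su w module_mem
    by (simp add: algebra_simps)
qed

end

section \<open>Operator norms\<close>

lemma opnorm_nonneg:
  assumes "banach_bundle E" "banach_bundle F" shows "0 \<le> opnorm E F x h"
proof -
  have "ereal (bnorm F (h (bzero E x))) \<le> opnorm E F x h"
    unfolding opnorm_def using assms(1) by (intro SUP_upper) (simp add: mem_fib_iff)
  then show ?thesis using bundle_norm_nonneg[OF assms(2)] by (meson ereal_less_eq(5) order_trans)
qed

lemma opnorm_le_ereal:
  assumes "\<And>a. a \<in> fib E x \<Longrightarrow> bnorm F (h a) \<le> C * bnorm E a" "0 \<le> C"
  shows "opnorm E F x h \<le> ereal C"
  unfolding opnorm_def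
proof (rule SUP_least)
  fix a assume "a \<in> {a \<in> fib E x. bnorm E a \<le> 1}"
  then have "bnorm F (h a) \<le> C * 1"
    using assms(1)[of a] mult_left_mono[OF _ assms(2), of "bnorm E a" 1] by auto
  then show "ereal (bnorm F (h a)) \<le> ereal C" by simp
qed

lemma norm_le_of_opnorm_le:
  assumes E: "banach_bundle E" and F: "banach_bundle F"
    and h_mem: "\<And>a. a \<in> fib E x \<Longrightarrow> h a \<in> fib F y"
    and h_scale: "\<And>c a. a \<in> fib E x \<Longrightarrow> h (bscale E c a) = bscale F c (h a)"
    and le: "opnorm E F x h \<le> ereal C" and a: "a \<in> fib E x"
  shows "bnorm F (h a) \<le> C * bnorm E a"
proof -
  interpret X: banach_fiber_space E x by (rule banach_bundle_fiber_space[OF E])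
  interpret Y: banach_fiber_space F y by (rule banach_bundle_fiber_space[OF F])
  show ?thesis
  proof (cases "bnorm E a = 0")
    case True
    then have "h a = bscale F 0 (h a)"
      using h_scale[of "bzero E x" 0] X.norm_eq_zero_iff a by simp
    then show ?thesis using True Y.norm_scale[of "h a" 0] h_mem[OF a] by simp
  next
    case False
    let ?n = "bnorm E a"
    have n: "?n > 0" using False X.norm_nonneg[OF a] by simp
    have "bnorm E (bscale E (1 / ?n) a) = 1" using a n by simp
    then have "ereal (bnorm F (h (bscale E (1 / ?n) a))) \<le> opnorm E F x h"
      unfolding opnorm_def using a by (intro SUP_upper) auto
    then have "bnorm F (h (bscale E (1 / ?n) a)) \<le> C" using le by (meson ereal_less_eq(3) order_trans)
    moreover have "bnorm F (h (bscale E (1 / ?n) a)) = bnorm F (h a) / ?n"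
      using h_scale[OF a] h_mem[OF a] n by simp
    ultimately show ?thesis using n by (simp add: divide_le_eq mult.commute)
  qed
qed

lemma ereal_sum_le_split:
  fixes O1 O2 D1 D2 :: ereal and l r :: real
  assumes "0 \<le> O1" "0 \<le> O2" "O1 \<le> D1" "ereal l * O2 \<le> D2" "D1 + D2 = ereal r" "1 \<le> l"
  shows "\<exists>a1 a2. O1 = ereal a1 \<and> O2 = ereal a2 \<and> a1 + l * a2 \<le> r"
proof -
  have "0 \<le> ereal l * O2" using assms(2,6) by simp
  then obtain d1 d2 where D: "D1 = ereal d1" "D2 = ereal d2"
    using assms(1,3,4,5) by (cases D1; cases D2) auto
  obtain a1 where a1: "O1 = ereal a1" using assms(1,3) D by (cases O1) auto
  obtain a2 where a2: "O2 = ereal a2" using assms(2,4,6) D by (cases O2) auto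
  have "a1 + l * a2 \<le> d1 + d2" using assms(3,4) a1 a2 D by simp
  also have "\<dots> = r" using assms(5) D by simp
  finally show ?thesis using a1 a2 by blast
qed

section \<open>Almost representations\<close>

locale almost_representation_setting =
  fixes Gr :: "('g::t2_space, 'x::topological_space) groupoid"
    and \<mu> :: "'x \<Rightarrow> 'g measure"
    and A :: "('x, 'a::t2_space) babundle"
    and act :: "'g \<Rightarrow> 'a \<Rightarrow> 'a"
    and E :: "('x, 'e::t2_space) bbundle"
    and m :: "'a \<Rightarrow> 'e \<Rightarrow> 'e"
    and \<sigma> :: "'g \<Rightarrow> 'g \<Rightarrow> 'a"
    and T :: "'g \<Rightarrow> 'e \<Rightarrow> 'e"
  assumes locally_compact: "locally_compact_groupoid Gr \<mu>"
    and algebra_G: "algebra_G_bundle Gr A act"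
    and module: "module_bundle A E m"
    and multiplier: "multiplier Gr A act \<sigma>"
    and A_linear: "A_linear Gr A E act m T"
    and almost_rep: "almost_representation Gr A E m \<sigma> T"
begin

lemma groupoid: "topological_groupoid Gr"
  using locally_compact unfolding locally_compact_groupoid_def by blast

lemmas groupoid_simps [simp] =
  src_unit[OF groupoid] tgt_unit[OF groupoid] src_ginv[OF groupoid] tgt_ginv[OF groupoid]
  ginv_ginv[OF groupoid] in_orbit_self[OF groupoid]

lemma algebra: "banach_algebra_bundle A"
  using algebra_G unfolding algebra_G_bundle_def by blast

lemma bundle_E: "banach_bundle E"
  by (rule module_banach_bundle[OF module])

lemma norm_E_nonneg [simp]: "0 \<le> bnorm E e"
  by (rule bundle_norm_nonneg[OF bundle_E])

lemma act_mem: "a \<in> fib A (src Gr g) \<Longrightarrow> act g a \<in> fib A (tgt Gr g)"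
  using algebra_G unfolding algebra_G_bundle_def by (meson bij_betw_apply)

lemma act_unit: "act (unit Gr (bproj A a)) a = a"
  using algebra_G unfolding algebra_G_bundle_def by blast

lemma act_gmul: "src Gr g = tgt Gr h \<Longrightarrow> bproj A a = src Gr h \<Longrightarrow> act (gmul Gr g h) a = act g (act h a)"
  using algebra_G unfolding algebra_G_bundle_def by blast

lemma sigma_mem: "src Gr g = tgt Gr h \<Longrightarrow> \<sigma> g h \<in> fib A (tgt Gr g)"
  using multiplier unfolding multiplier_def by blast

lemma sigma_invertible: "src Gr g = tgt Gr h \<Longrightarrow> a_invertible A (\<sigma> g h)"
  using multiplier unfolding multiplier_def by blast

lemma ainv_sigma:
  assumes "src Gr g = tgt Gr h"
  shows "ainv A (\<sigma> g h) \<in> fib A (tgt Gr g)" "amul A (ainv A (\<sigma> g h)) (\<sigma> g h) = aone A (tgt Gr g)"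
  using ainv_inverse[OF algebra sigma_invertible[OF assms]] sigma_mem[OF assms] by (auto simp: mem_fib_iff)

lemma norm_ainv_sigma_ginv_le: "bnorm A (ainv A (\<sigma> g (ginv Gr g))) \<le> ell Gr A \<sigma> g"
  unfolding ell_def by simp

lemma one_le_ell: "1 \<le> ell Gr A \<sigma> g"
  unfolding ell_def by simp

lemma ell_nonneg: "0 \<le> ell Gr A \<sigma> g"
  using one_le_ell[of g] by simp

lemma T_A_linear: "a \<in> fib A (src Gr g) \<Longrightarrow> e \<in> fib E (src Gr g) \<Longrightarrow> T g (m a e) = m (act g a) (T g e)"
  using A_linear unfolding A_linear_def by blast

lemma T_pullback_morphism: "pullback_morphism E E (src Gr) (tgt Gr) T"
  using almost_rep unfolding almost_representation_def by blast

lemma T_mem: "e \<in> fib E (src Gr g) \<Longrightarrow> T g e \<in> fib E (tgt Gr g)"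
  using T_pullback_morphism unfolding pullback_morphism_def fib_bounded_linear_def by blast

lemma T_badd: "a \<in> fib E (src Gr g) \<Longrightarrow> b \<in> fib E (src Gr g) \<Longrightarrow> T g (badd E a b) = badd E (T g a) (T g b)"
  using T_pullback_morphism unfolding pullback_morphism_def fib_bounded_linear_def by blast

lemma T_bscale: "a \<in> fib E (src Gr g) \<Longrightarrow> T g (bscale E c a) = bscale E c (T g a)"
  using T_pullback_morphism unfolding pullback_morphism_def fib_bounded_linear_def by blast

lemma T_bounded: "\<exists>K. \<forall>a\<in>fib E (src Gr g). bnorm E (T g a) \<le> K * bnorm E a"
  using T_pullback_morphism unfolding pullback_morphism_def fib_bounded_linear_def by blast

lemma T_bsub:
  assumes "a \<in> fib E (src Gr g)" "b \<in> fib E (src Gr g)"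
  shows "T g (bsub E a b) = bsub E (T g a) (T g b)"
proof -
  interpret banach_fiber_space E "src Gr g" by (rule banach_bundle_fiber_space[OF bundle_E])
  show ?thesis unfolding bsub_def using assms by (simp add: T_badd T_bscale)
qed

lemma T_bzero: "T g (bzero E (src Gr g)) = bzero E (tgt Gr g)"
proof -
  interpret X: banach_fiber_space E "src Gr g" by (rule banach_bundle_fiber_space[OF bundle_E])
  interpret Y: banach_fiber_space E "tgt Gr g" by (rule banach_bundle_fiber_space[OF bundle_E])
  show ?thesis using T_bsub[OF X.zero_mem X.zero_mem] T_mem[OF X.zero_mem] by simp
qed

lemma tendsto_T:
  assumes "(g \<longlongrightarrow> g0) F" "(f \<longlongrightarrow> f0) F"
    and "eventually (\<lambda>i. bproj E (f i) = src Gr (g i)) F" "bproj E f0 = src Gr g0"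
  shows "((\<lambda>i. T (g i) (f i)) \<longlongrightarrow> T g0 f0) F"
proof -
  have "continuous_on {(g, e). bproj E e = src Gr g} (\<lambda>(g, e). (g, T g e))"
    using T_pullback_morphism unfolding pullback_morphism_def by blast
  from continuous_on_tendsto_compose[OF this, of "\<lambda>i. (g i, f i)" "(g0, f0)"]
  have "((\<lambda>i. (g i, T (g i) (f i))) \<longlongrightarrow> (g0, T g0 f0)) F"
    using assms by (auto intro: tendsto_Pair)
  from tendsto_snd[OF this] show ?thesis by simp
qed

definition defect_real :: "'x \<Rightarrow> real" where
  "defect_real x = real_of_ereal (defect Gr A E m \<sigma> T x)"

lemma defect_nonneg: "0 \<le> defect Gr A E m \<sigma> T x"
proof -
  let ?P = "{(g, h). tgt Gr g \<in> orbit Gr x \<and> tgt Gr h = src Gr g}"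
  let ?f = "\<lambda>gh. ereal (ell Gr A \<sigma> (fst gh)) *
        opnorm E E (src Gr (snd gh))
          (\<lambda>e. bsub E (m (\<sigma> (fst gh) (snd gh)) (T (gmul Gr (fst gh) (snd gh)) e))
                       (T (fst gh) (T (snd gh) e)))"
  have "0 \<le> opnorm E E x (\<lambda>e. bsub E e (T (unit Gr x) e))"
    by (rule opnorm_nonneg[OF bundle_E bundle_E])
  also have "\<dots> \<le> (SUP y\<in>orbit Gr x. opnorm E E y (\<lambda>e. bsub E e (T (unit Gr y) e)))"
    by (rule SUP_upper) simp
  finally have "0 \<le> (SUP y\<in>orbit Gr x. opnorm E E y (\<lambda>e. bsub E e (T (unit Gr y) e)))" .
  moreover have "0 \<le> ?f (unit Gr x, unit Gr x)"
    using one_le_ell[of "unit Gr x"] by (simp add: ereal_zero_le_0_iff opnorm_nonneg[OF bundle_E bundle_E])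
  then have "0 \<le> (SUP gh\<in>?P. ?f gh)"
    by (rule order_trans) (rule SUP_upper, simp)
  ultimately show ?thesis unfolding defect_def by simp
qed

lemma defect_eq_real: "defect Gr A E m \<sigma> T x = ereal (defect_real x)"
  and defect_real_nonneg: "0 \<le> defect_real x"
  and defect_real_le_quarter: "defect_real x \<le> 1 / 4"
proof -
  have le: "defect Gr A E m \<sigma> T x \<le> ereal (1 / 4)"
    using almost_rep unfolding almost_representation_def
    by (metis ereal_divide numeral_eq_ereal one_ereal_def zero_neq_numeral)
  then show eq: "defect Gr A E m \<sigma> T x = ereal (defect_real x)"
    using defect_nonneg[of x] unfolding defect_real_def by (cases "defect Gr A E m \<sigma> T x") auto
  show "0 \<le> defect_real x" "defect_real x \<le> 1 / 4"
    using le defect_nonneg[of x] unfolding eq by auto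
qed

lemma norm_unit_deviation_le:
  assumes "opnorm E E y (\<lambda>e. bsub E e (T (unit Gr y) e)) \<le> ereal a" and e: "e \<in> fib E y"
  shows "bnorm E (bsub E e (T (unit Gr y) e)) \<le> a * bnorm E e"
proof (rule norm_le_of_opnorm_le[OF bundle_E bundle_E _ _ assms])
  interpret banach_fiber_space E y by (rule banach_bundle_fiber_space[OF bundle_E])
  show "bsub E f (T (unit Gr y) f) \<in> fib E y" if "f \<in> fib E y" for f
    using that T_mem[of f "unit Gr y"] by simp
  show "bsub E (bscale E c f) (T (unit Gr y) (bscale E c f)) = bscale E c (bsub E f (T (unit Gr y) f))"
    if "f \<in> fib E y" for c f
    using that T_mem[of f "unit Gr y"] T_bscale[of f "unit Gr y" c] by (simp add: scale_sub)
qed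

lemma norm_cocycle_deviation_le:
  assumes k: "tgt Gr k = src Gr h"
    and "opnorm E E (src Gr k) (\<lambda>e. bsub E (m (\<sigma> h k) (T (gmul Gr h k) e)) (T h (T k e))) \<le> ereal a"
    and e: "e \<in> fib E (src Gr k)"
  shows "bnorm E (bsub E (m (\<sigma> h k) (T (gmul Gr h k) e)) (T h (T k e))) \<le> a * bnorm E e"
proof (rule norm_le_of_opnorm_le[OF bundle_E bundle_E _ _ assms(2) e])
  interpret banach_fiber_space E "tgt Gr h" by (rule banach_bundle_fiber_space[OF bundle_E])
  have Thk_mem: "T (gmul Gr h k) f \<in> fib E (tgt Gr h)" if "f \<in> fib E (src Gr k)" for f
    using T_mem[of f "gmul Gr h k"] src_gmul[OF groupoid] tgt_gmul[OF groupoid] k that by simp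
  have TT_mem: "T h (T k f) \<in> fib E (tgt Gr h)" if "f \<in> fib E (src Gr k)" for f
    using T_mem[of "T k f" h] T_mem[OF that] k by simp
  show "bsub E (m (\<sigma> h k) (T (gmul Gr h k) f)) (T h (T k f)) \<in> fib E (tgt Gr h)"
    if "f \<in> fib E (src Gr k)" for f
    using module_mem[OF module sigma_mem Thk_mem[OF that]] TT_mem[OF that] k by simp
  show "bsub E (m (\<sigma> h k) (T (gmul Gr h k) (bscale E r f))) (T h (T k (bscale E r f))) =
      bscale E r (bsub E (m (\<sigma> h k) (T (gmul Gr h k) f)) (T h (T k f)))"
    if "f \<in> fib E (src Gr k)" for r f
    using that Thk_mem[OF that] TT_mem[OF that] T_mem[OF that] module_mem[OF module sigma_mem] k
      module_bscale[OF module sigma_mem Thk_mem[OF that]] src_gmul[OF groupoid]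
    by (simp add: T_bscale scale_sub)
qed

lemma defect_splits:
  assumes y: "y \<in> orbit Gr x" and h: "tgt Gr h \<in> orbit Gr x" and k: "tgt Gr k = src Gr h"
  obtains a1 a2 where "0 \<le> a1" "0 \<le> a2" "a1 + ell Gr A \<sigma> h * a2 \<le> defect_real x"
    "\<And>e. e \<in> fib E y \<Longrightarrow> bnorm E (bsub E e (T (unit Gr y) e)) \<le> a1 * bnorm E e"
    "\<And>e. e \<in> fib E (src Gr k) \<Longrightarrow>
       bnorm E (bsub E (m (\<sigma> h k) (T (gmul Gr h k) e)) (T h (T k e))) \<le> a2 * bnorm E e"
proof -
  let ?u = "\<lambda>e. bsub E e (T (unit Gr y) e)"
  let ?c = "\<lambda>e. bsub E (m (\<sigma> h k) (T (gmul Gr h k) e)) (T h (T k e))"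
  let ?P = "{(g, h). tgt Gr g \<in> orbit Gr x \<and> tgt Gr h = src Gr g}"
  let ?f = "\<lambda>gh. ereal (ell Gr A \<sigma> (fst gh)) *
        opnorm E E (src Gr (snd gh))
          (\<lambda>e. bsub E (m (\<sigma> (fst gh) (snd gh)) (T (gmul Gr (fst gh) (snd gh)) e))
                       (T (fst gh) (T (snd gh) e)))"
  have "opnorm E E y ?u \<le> (SUP y\<in>orbit Gr x. opnorm E E y (\<lambda>e. bsub E e (T (unit Gr y) e)))"
    by (rule SUP_upper[OF y])
  moreover have "ereal (ell Gr A \<sigma> h) * opnorm E E (src Gr k) ?c \<le> (SUP gh\<in>?P. ?f gh)"
    using SUP_upper[of "(h, k)" ?P ?f] h k by simp
  ultimately obtain a1 a2 where a: "opnorm E E y ?u = ereal a1" "opnorm E E (src Gr k) ?c = ereal a2"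
    "a1 + ell Gr A \<sigma> h * a2 \<le> defect_real x"
    using ereal_sum_le_split[OF opnorm_nonneg[OF bundle_E bundle_E] opnorm_nonneg[OF bundle_E bundle_E]
        _ _ _ one_le_ell] defect_eq_real[of x]
    unfolding defect_def by blast
  show thesis
  proof
    show "0 \<le> a1" "0 \<le> a2"
      using a opnorm_nonneg[OF bundle_E bundle_E] by (metis ereal_less_eq(5))+
    show "a1 + ell Gr A \<sigma> h * a2 \<le> defect_real x" by (rule a(3))
    show "bnorm E (?u e) \<le> a1 * bnorm E e" if "e \<in> fib E y" for e
      using norm_unit_deviation_le[OF _ that] a(1) by simp
    show "bnorm E (?c e) \<le> a2 * bnorm E e" if "e \<in> fib E (src Gr k)" for e
      using norm_cocycle_deviation_le[OF k _ that] a(2) by simp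
  qed
qed

lemma bound_ge:
  "tgt Gr k \<in> orbit Gr x \<Longrightarrow> ereal (ell Gr A \<sigma> k) * opnorm E E (src Gr k) (T k) \<le> bound Gr A E \<sigma> T x"
  unfolding bound_def by (rule SUP_upper) simp

definition left_approx_inverse :: "'g \<Rightarrow> 'e \<Rightarrow> 'e" where
  "left_approx_inverse g e = m (ainv A (\<sigma> (ginv Gr g) g)) (T (ginv Gr g) e)"

definition right_approx_inverse :: "'g \<Rightarrow> 'e \<Rightarrow> 'e" where
  "right_approx_inverse g e = m (act (ginv Gr g) (ainv A (\<sigma> g (ginv Gr g)))) (T (ginv Gr g) e)"

lemma T_ginv_mem: "e \<in> fib E (tgt Gr g) \<Longrightarrow> T (ginv Gr g) e \<in> fib E (src Gr g)"
  using T_mem[of e "ginv Gr g"] by simp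

lemma ainv_sigma_ginv_left:
  "ainv A (\<sigma> (ginv Gr g) g) \<in> fib A (src Gr g)"
  "amul A (ainv A (\<sigma> (ginv Gr g) g)) (\<sigma> (ginv Gr g) g) = aone A (src Gr g)"
  using ainv_sigma[of "ginv Gr g" g] by simp_all

lemma ainv_sigma_ginv_right:
  "ainv A (\<sigma> g (ginv Gr g)) \<in> fib A (tgt Gr g)"
  "amul A (ainv A (\<sigma> g (ginv Gr g))) (\<sigma> g (ginv Gr g)) = aone A (tgt Gr g)"
  using ainv_sigma[of g "ginv Gr g"] by simp_all

lemma left_approx_inverse_mem: "e \<in> fib E (tgt Gr g) \<Longrightarrow> left_approx_inverse g e \<in> fib E (src Gr g)"
  unfolding left_approx_inverse_def by (rule module_mem[OF module ainv_sigma_ginv_left(1) T_ginv_mem])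

lemma right_approx_inverse_mem: "e \<in> fib E (tgt Gr g) \<Longrightarrow> right_approx_inverse g e \<in> fib E (src Gr g)"
  unfolding right_approx_inverse_def
  using module_mem[OF module _ T_ginv_mem] act_mem[of _ "ginv Gr g"] ainv_sigma_ginv_right(1) by simp

lemma right_approx_inverse_bsub:
  "a \<in> fib E (tgt Gr g) \<Longrightarrow> b \<in> fib E (tgt Gr g) \<Longrightarrow>
    right_approx_inverse g (bsub E a b) = bsub E (right_approx_inverse g a) (right_approx_inverse g b)"
  unfolding right_approx_inverse_def
  using T_bsub[of a "ginv Gr g" b] module_bsub[OF module _ T_ginv_mem T_ginv_mem]
    act_mem[of _ "ginv Gr g"] ainv_sigma_ginv_right(1) by simp

lemma T_right_approx_inverse:
  assumes e: "e \<in> fib E (tgt Gr g)"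
  shows "T g (right_approx_inverse g e) = m (ainv A (\<sigma> g (ginv Gr g))) (T g (T (ginv Gr g) e))"
proof -
  let ?d = "ainv A (\<sigma> g (ginv Gr g))"
  have "act g (act (ginv Gr g) ?d) = act (gmul Gr g (ginv Gr g)) ?d"
    using act_gmul[of g "ginv Gr g" ?d] ainv_sigma_ginv_right(1) by (simp add: mem_fib_iff)
  also have "\<dots> = ?d"
    using gmul_ginv[OF groupoid, of g] act_unit[of ?d] ainv_sigma_ginv_right(1) by (simp add: mem_fib_iff)
  finally show ?thesis
    unfolding right_approx_inverse_def
    using T_A_linear[OF _ T_ginv_mem[OF e], of "act (ginv Gr g) ?d"] act_mem[of ?d "ginv Gr g"]
      ainv_sigma_ginv_right(1) by simp
qed

lemma norm_sub_left_approx_inverse_le: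
  assumes f: "f \<in> fib E (src Gr g)"
  shows "bnorm E (bsub E f (left_approx_inverse g (T g f))) \<le> defect_real (tgt Gr g) * bnorm E f"
proof -
  let ?h = "ginv Gr g"
  obtain a1 a2 where a: "0 \<le> a1" "0 \<le> a2" "a1 + ell Gr A \<sigma> ?h * a2 \<le> defect_real (tgt Gr g)"
    and unit: "\<And>e. e \<in> fib E (src Gr g) \<Longrightarrow>
      bnorm E (bsub E e (T (unit Gr (src Gr g)) e)) \<le> a1 * bnorm E e"
    and cocycle: "\<And>e. e \<in> fib E (src Gr g) \<Longrightarrow>
      bnorm E (bsub E (m (\<sigma> ?h g) (T (gmul Gr ?h g) e)) (T ?h (T g e))) \<le> a2 * bnorm E e"
    by (rule defect_splits[of "src Gr g" "tgt Gr g" ?h g]) (use src_in_orbit_tgt[OF groupoid] in simp_all)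
  have "bnorm E (bsub E f (left_approx_inverse g (T g f))) \<le> (a1 + ell Gr A \<sigma> ?h * a2) * bnorm E f"
    unfolding left_approx_inverse_def
  proof (rule norm_sub_module_left_inverse_le[OF module f _ _ _ ainv_sigma_ginv_left])
    show "T (unit Gr (src Gr g)) f \<in> fib E (src Gr g)"
      using T_mem[of f "unit Gr (src Gr g)"] f by simp
    show "T ?h (T g f) \<in> fib E (src Gr g)"
      using T_ginv_mem T_mem f by blast
    show "\<sigma> ?h g \<in> fib A (src Gr g)"
      using sigma_mem[of ?h g] by simp
    show "bnorm A (ainv A (\<sigma> ?h g)) \<le> ell Gr A \<sigma> ?h"
      using norm_ainv_sigma_ginv_le[of ?h] by simp
    show "bnorm E (bsub E f (T (unit Gr (src Gr g)) f)) \<le> a1 * bnorm E f"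
      by (rule unit[OF f])
    show "bnorm E (bsub E (m (\<sigma> ?h g) (T (unit Gr (src Gr g)) f)) (T ?h (T g f))) \<le> a2 * bnorm E f"
      using cocycle[OF f] ginv_gmul[OF groupoid, of g] by simp
  qed (rule ell_nonneg)
  also have "\<dots> \<le> defect_real (tgt Gr g) * bnorm E f"
    using a(3) by (rule mult_right_mono) simp
  finally show ?thesis .
qed

lemma norm_sub_right_approx_inverse_le:
  assumes e: "e \<in> fib E (tgt Gr g)"
  shows "bnorm E (bsub E e (T g (right_approx_inverse g e))) \<le> defect_real (tgt Gr g) * bnorm E e"
proof -
  let ?h = "ginv Gr g"
  obtain a1 a2 where a: "0 \<le> a1" "0 \<le> a2" "a1 + ell Gr A \<sigma> g * a2 \<le> defect_real (tgt Gr g)"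
    and unit: "\<And>e. e \<in> fib E (tgt Gr g) \<Longrightarrow>
      bnorm E (bsub E e (T (unit Gr (tgt Gr g)) e)) \<le> a1 * bnorm E e"
    and cocycle: "\<And>e. e \<in> fib E (src Gr ?h) \<Longrightarrow>
      bnorm E (bsub E (m (\<sigma> g ?h) (T (gmul Gr g ?h) e)) (T g (T ?h e))) \<le> a2 * bnorm E e"
    by (rule defect_splits[of "tgt Gr g" "tgt Gr g" g ?h]) simp_all
  have "bnorm E (bsub E e (T g (right_approx_inverse g e))) \<le> (a1 + ell Gr A \<sigma> g * a2) * bnorm E e"
    unfolding T_right_approx_inverse[OF e]
  proof (rule norm_sub_module_left_inverse_le[OF module e _ _ _ ainv_sigma_ginv_right])
    show "T (unit Gr (tgt Gr g)) e \<in> fib E (tgt Gr g)"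
      using T_mem[of e "unit Gr (tgt Gr g)"] e by simp
    show "T g (T ?h e) \<in> fib E (tgt Gr g)"
      using T_ginv_mem T_mem e by blast
    show "\<sigma> g ?h \<in> fib A (tgt Gr g)"
      using sigma_mem[of g ?h] by simp
    show "bnorm E (bsub E e (T (unit Gr (tgt Gr g)) e)) \<le> a1 * bnorm E e"
      by (rule unit[OF e])
    show "bnorm E (bsub E (m (\<sigma> g ?h) (T (unit Gr (tgt Gr g)) e)) (T g (T ?h e))) \<le> a2 * bnorm E e"
      using cocycle[of e] e gmul_ginv[OF groupoid, of g] by simp
  qed (rule norm_ainv_sigma_ginv_le, rule ell_nonneg)
  also have "\<dots> \<le> defect_real (tgt Gr g) * bnorm E e"
    using a(3) by (rule mult_right_mono) simp
  finally show ?thesis .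
qed

lemma T_inj:
  assumes f: "f \<in> fib E (src Gr g)" and f': "f' \<in> fib E (src Gr g)" and eq: "T g f = T g f'"
  shows "f = f'"
proof -
  interpret X: banach_fiber_space E "src Gr g" by (rule banach_bundle_fiber_space[OF bundle_E])
  interpret Y: banach_fiber_space E "tgt Gr g" by (rule banach_bundle_fiber_space[OF bundle_E])
  let ?d = "bsub E f f'"
  have d: "?d \<in> fib E (src Gr g)" using f f' by simp
  have "T g ?d = bzero E (tgt Gr g)" using T_bsub[OF f f'] eq T_mem[OF f'] by simp
  moreover have "left_approx_inverse g (bzero E (tgt Gr g)) = bzero E (src Gr g)"
    unfolding left_approx_inverse_def
    using T_bzero[of "ginv Gr g"] module_bzero[OF module ainv_sigma_ginv_left(1)] by simp
  ultimately have "bnorm E ?d \<le> defect_real (tgt Gr g) * bnorm E ?d"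
    using norm_sub_left_approx_inverse_le[OF d] d by simp
  moreover have "defect_real (tgt Gr g) * bnorm E ?d \<le> 1 / 4 * bnorm E ?d"
    using defect_real_le_quarter[of "tgt Gr g"] X.norm_nonneg[OF d] by (rule mult_right_mono)
  ultimately have "bnorm E ?d = 0"
    using X.norm_nonneg[OF d] by linarith
  then show ?thesis using X.eq_if_norm_sub_eq_zero f f' by blast
qed

lemma T_surj:
  assumes e: "e \<in> fib E (tgt Gr g)"
  shows "\<exists>f\<in>fib E (src Gr g). T g f = e"
proof -
  interpret banach_fiber_space E "tgt Gr g" by (rule banach_bundle_fiber_space[OF bundle_E])
  have "\<exists>u\<in>fib E (tgt Gr g). T g (right_approx_inverse g u) = e"
  proof (rule near_identity_surj)
    show "T g (right_approx_inverse g u) \<in> fib E (tgt Gr g)" if "u \<in> fib E (tgt Gr g)" for u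
      using T_mem right_approx_inverse_mem that by blast
    show "T g (right_approx_inverse g (bsub E u v)) =
        bsub E (T g (right_approx_inverse g u)) (T g (right_approx_inverse g v))"
      if "u \<in> fib E (tgt Gr g)" "v \<in> fib E (tgt Gr g)" for u v
      using right_approx_inverse_bsub[OF that] T_bsub right_approx_inverse_mem that by simp
    show "bnorm E (bsub E u (T g (right_approx_inverse g u))) \<le> defect_real (tgt Gr g) * bnorm E u"
      if "u \<in> fib E (tgt Gr g)" for u
      by (rule norm_sub_right_approx_inverse_le[OF that])
    show "defect_real (tgt Gr g) < 1"
      using defect_real_le_quarter[of "tgt Gr g"] by simp
  qed (rule e)
  then show ?thesis using right_approx_inverse_mem by blast
qed

definition T_inverse :: "'g \<Rightarrow> 'e \<Rightarrow> 'e" where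
  "T_inverse g e = (SOME f. f \<in> fib E (src Gr g) \<and> T g f = e)"

lemma T_inverse_spec:
  assumes "e \<in> fib E (tgt Gr g)"
  shows T_inverse_mem: "T_inverse g e \<in> fib E (src Gr g)" and T_T_inverse: "T g (T_inverse g e) = e"
proof -
  have "\<exists>f. f \<in> fib E (src Gr g) \<and> T g f = e" using T_surj[OF assms] by blast
  then have "T_inverse g e \<in> fib E (src Gr g) \<and> T g (T_inverse g e) = e"
    unfolding T_inverse_def by (rule someI_ex)
  then show "T_inverse g e \<in> fib E (src Gr g)" "T g (T_inverse g e) = e" by auto
qed

lemma T_inverse_T: "f \<in> fib E (src Gr g) \<Longrightarrow> T_inverse g (T g f) = f"
  by (rule T_inj[OF T_inverse_mem[OF T_mem] _ T_T_inverse[OF T_mem]])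

lemma T_inverse_eqI:
  assumes "f \<in> fib E (src Gr g)" "T g f = e" shows "T_inverse g e = f"
  using T_inverse_T[OF assms(1)] assms(2) by simp

lemma T_inverse_badd:
  assumes "a \<in> fib E (tgt Gr g)" "b \<in> fib E (tgt Gr g)"
  shows "T_inverse g (badd E a b) = badd E (T_inverse g a) (T_inverse g b)"
  using assms T_inverse_mem T_T_inverse T_badd
    banach_fiber_space.add_mem[OF banach_bundle_fiber_space[OF bundle_E]]
  by (intro T_inverse_eqI) auto

lemma T_inverse_bscale:
  assumes "a \<in> fib E (tgt Gr g)"
  shows "T_inverse g (bscale E c a) = bscale E c (T_inverse g a)"
  using assms T_inverse_mem T_T_inverse T_bscale
    banach_fiber_space.scale_mem[OF banach_bundle_fiber_space[OF bundle_E]]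
  by (intro T_inverse_eqI) auto

lemma T_inverse_bsub:
  assumes "a \<in> fib E (tgt Gr g)" "b \<in> fib E (tgt Gr g)"
  shows "T_inverse g (bsub E a b) = bsub E (T_inverse g a) (T_inverse g b)"
  using assms T_inverse_mem T_T_inverse T_bsub
    banach_fiber_space.sub_mem[OF banach_bundle_fiber_space[OF bundle_E]]
  by (intro T_inverse_eqI) auto

lemma norm_T_inverse_le_left_approx_inverse:
  assumes e: "e \<in> fib E (tgt Gr g)"
  shows "(1 - defect_real (tgt Gr g)) * bnorm E (T_inverse g e) \<le> bnorm E (left_approx_inverse g e)"
proof -
  interpret banach_fiber_space E "src Gr g" by (rule banach_bundle_fiber_space[OF bundle_E])
  let ?f = "T_inverse g e"
  have "bnorm E ?f \<le> bnorm E (bsub E ?f (left_approx_inverse g e)) + bnorm E (left_approx_inverse g e)"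
    using norm_le_norm_sub_add T_inverse_mem[OF e] left_approx_inverse_mem[OF e] by blast
  also have "\<dots> \<le> defect_real (tgt Gr g) * bnorm E ?f + bnorm E (left_approx_inverse g e)"
    using norm_sub_left_approx_inverse_le[OF T_inverse_mem[OF e]] T_T_inverse[OF e] by simp
  finally show ?thesis by (simp add: algebra_simps)
qed

lemma norm_left_approx_inverse_le:
  "e \<in> fib E (tgt Gr g) \<Longrightarrow>
    bnorm E (left_approx_inverse g e) \<le> bnorm A (ainv A (\<sigma> (ginv Gr g) g)) * bnorm E (T (ginv Gr g) e)"
  unfolding left_approx_inverse_def by (rule module_norm_le[OF module ainv_sigma_ginv_left(1) T_ginv_mem])

text \<open>A crude bound, uniform in \<open>g\<close> as long as \<open>\<sigma>(g\<inverse>, g)\<inverse>\<close> is: it uses only \<open>r \<le> 1/2\<close>.\<close>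
lemma norm_T_inverse_le:
  assumes e: "e \<in> fib E (tgt Gr g)"
  shows "bnorm E (T_inverse g e) \<le> 2 * bnorm A (ainv A (\<sigma> (ginv Gr g) g)) * bnorm E (T (ginv Gr g) e)"
proof -
  have "1 / 2 * bnorm E (T_inverse g e) \<le> (1 - defect_real (tgt Gr g)) * bnorm E (T_inverse g e)"
    using defect_real_le_quarter[of "tgt Gr g"] by (intro mult_right_mono) auto
  then show ?thesis
    using norm_T_inverse_le_left_approx_inverse[OF e] norm_left_approx_inverse_le[OF e] by simp
qed

lemma T_inverse_bounded_linear: "fib_bounded_linear E E (tgt Gr g) (src Gr g) (T_inverse g)"
proof -
  obtain K where K: "\<forall>a\<in>fib E (src Gr (ginv Gr g)). bnorm E (T (ginv Gr g) a) \<le> K * bnorm E a"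
    using T_bounded by blast
  let ?c = "bnorm A (ainv A (\<sigma> (ginv Gr g) g))"
  have "bnorm E (T_inverse g a) \<le> (2 * ?c * max K 0) * bnorm E a" if a: "a \<in> fib E (tgt Gr g)" for a
  proof -
    have "bnorm E (T (ginv Gr g) a) \<le> max K 0 * bnorm E a"
      using K a by (smt (verit) mult_right_mono norm_E_nonneg src_ginv[OF groupoid])
    moreover have "0 \<le> ?c"
      using bundle_norm_nonneg[OF algebra_banach_bundle[OF algebra]] .
    ultimately show ?thesis
      using norm_T_inverse_le[OF a] by (smt (verit) mult.assoc mult_left_mono)
  qed
  then show ?thesis
    unfolding fib_bounded_linear_def using T_inverse_mem T_inverse_badd T_inverse_bscale by blast
qed

lemma one_minus_defect_eq: "1 - defect Gr A E m \<sigma> T x = ereal (1 - defect_real x)"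
  using defect_eq_real[of x] by (metis ereal_minus(1) one_ereal_def)

lemma norm_T_inverse_le_opnorm:
  assumes t: "opnorm E E (tgt Gr g) (T (ginv Gr g)) \<le> ereal t" and e: "e \<in> fib E (tgt Gr g)"
  shows "(1 - defect_real (tgt Gr g)) * bnorm E (T_inverse g e) \<le> ell Gr A \<sigma> (ginv Gr g) * t * bnorm E e"
proof -
  have "T (ginv Gr g) (bscale E c a) = bscale E c (T (ginv Gr g) a)" if "a \<in> fib E (tgt Gr g)" for c a
    using T_bscale[of a "ginv Gr g" c] that by simp
  then have "bnorm E (T (ginv Gr g) e) \<le> t * bnorm E e"
    using norm_le_of_opnorm_le[OF bundle_E bundle_E, of "tgt Gr g" "T (ginv Gr g)" "src Gr g" t e]
      T_ginv_mem t e by blast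
  moreover have "bnorm A (ainv A (\<sigma> (ginv Gr g) g)) \<le> ell Gr A \<sigma> (ginv Gr g)"
    using norm_ainv_sigma_ginv_le[of "ginv Gr g"] by simp
  ultimately have "bnorm A (ainv A (\<sigma> (ginv Gr g) g)) * bnorm E (T (ginv Gr g) e)
      \<le> ell Gr A \<sigma> (ginv Gr g) * (t * bnorm E e)"
    using ell_nonneg by (intro mult_mono) auto
  then show ?thesis
    using norm_T_inverse_le_left_approx_inverse[OF e] norm_left_approx_inverse_le[OF e]
    by (simp add: mult.assoc)
qed

lemma opnorm_T_inverse_le:
  "opnorm E E (tgt Gr g) (T_inverse g) \<le> bound Gr A E \<sigma> T (tgt Gr g) / (1 - defect Gr A E m \<sigma> T (tgt Gr g))"
proof -
  let ?x = "tgt Gr g" and ?h = "ginv Gr g"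
  let ?O = "opnorm E E ?x (T ?h)" and ?r = "defect_real ?x"
  have r: "0 \<le> ?r" "?r < 1" using defect_real_nonneg defect_real_le_quarter[of ?x] by auto
  have O_le: "ereal (ell Gr A \<sigma> ?h) * ?O \<le> bound Gr A E \<sigma> T ?x"
    using bound_ge[of ?h ?x] src_in_orbit_tgt[OF groupoid, of g] by simp
  have O_nonneg: "0 \<le> ?O" by (rule opnorm_nonneg[OF bundle_E bundle_E])
  then have "0 \<le> ereal (ell Gr A \<sigma> ?h) * ?O"
    using ell_nonneg by (simp add: ereal_zero_le_0_iff)
  then have "0 \<le> bound Gr A E \<sigma> T ?x" using O_le by (rule order_trans)
  then show ?thesis
  proof (cases "bound Gr A E \<sigma> T ?x")
    case PInf
    then show ?thesis using r by (simp add: one_minus_defect_eq divide_ereal_def del: ereal_divide)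
  next
    case (real b)
    obtain t where t: "?O = ereal t" "0 \<le> t"
      using O_le O_nonneg real one_le_ell[of ?h] by (cases ?O) auto
    have lt: "ell Gr A \<sigma> ?h * t \<le> b" using O_le real t by simp
    then have "0 \<le> b" using t(2) ell_nonneg[of ?h] by (smt (verit) mult_nonneg_nonneg)
    have "bnorm E (T_inverse g e) \<le> b / (1 - ?r) * bnorm E e" if e: "e \<in> fib E ?x" for e
    proof -
      have "(1 - ?r) * bnorm E (T_inverse g e) \<le> ell Gr A \<sigma> ?h * t * bnorm E e"
        using norm_T_inverse_le_opnorm[OF _ e] t by simp
      also have "\<dots> \<le> b * bnorm E e" using lt by (rule mult_right_mono) simp
      finally show ?thesis using r by (simp add: field_simps)
    qed
    then have "opnorm E E ?x (T_inverse g) \<le> ereal (b / (1 - ?r))"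
      using \<open>0 \<le> b\<close> r by (intro opnorm_le_ereal) auto
    then show ?thesis using real r by (simp add: one_minus_defect_eq)
  qed simp
qed

lemma ainv_sigma_eventually_bounded:
  assumes g: "(g \<longlongrightarrow> g0) F"
  shows "\<exists>C. eventually (\<lambda>i. bnorm A (ainv A (\<sigma> (ginv Gr (g i)) (g i))) \<le> C) F"
proof (rule ainv_eventually_bounded[OF algebra])
  have "continuous_on (composable Gr) (\<lambda>(g, h). \<sigma> g h)"
    using multiplier unfolding multiplier_def by blast
  moreover have "((\<lambda>i. (ginv Gr (g i), g i)) \<longlongrightarrow> (ginv Gr g0, g0)) F"
    using tendsto_ginv[OF groupoid g] g by (rule tendsto_Pair)
  ultimately show "((\<lambda>i. \<sigma> (ginv Gr (g i)) (g i)) \<longlongrightarrow> \<sigma> (ginv Gr g0) g0) F"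
    using continuous_on_tendsto_compose[of "composable Gr" "\<lambda>(g, h). \<sigma> g h"]
    by (fastforce simp: composable_def)
qed (simp_all add: sigma_invertible)

lemma norm_T_tendsto_0:
  assumes g: "(g \<longlongrightarrow> g0) F" and d: "((\<lambda>i. bnorm E (d i)) \<longlongrightarrow> 0) F"
    and d_fib: "eventually (\<lambda>i. bproj E (d i) = src Gr (g i)) F"
  shows "((\<lambda>i. bnorm E (T (g i) (d i))) \<longlongrightarrow> 0) F"
proof -
  have "((\<lambda>i. bproj E (d i)) \<longlongrightarrow> src Gr g0) F"
    using tendsto_cong[OF d_fib] tendsto_src[OF groupoid g] by simp
  then have "(d \<longlongrightarrow> bzero E (src Gr g0)) F"
    by (rule bundle_tendsto_bzero[OF bundle_E _ d])
  then have "((\<lambda>i. T (g i) (d i)) \<longlongrightarrow> T g0 (bzero E (src Gr g0))) F"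
    using d_fib by (intro tendsto_T[OF g]) (auto simp: bundle_proj_bzero[OF bundle_E])
  then have "((\<lambda>i. bnorm E (T (g i) (d i))) \<longlongrightarrow> bnorm E (bzero E (tgt Gr g0))) F"
    using T_bzero[of g0] by (simp add: bundle_tendsto_norm[OF bundle_E])
  then show ?thesis by (simp add: bundle_norm_bzero[OF bundle_E])
qed

lemma tendsto_T_inverse_along_lifts:
  assumes g: "(g \<longlongrightarrow> g0) G" and e: "(e \<longlongrightarrow> e0) G" and f: "(f \<longlongrightarrow> T_inverse g0 e0) G"
    and e_fib: "eventually (\<lambda>q. bproj E (e q) = tgt Gr (g q)) G"
    and f_fib: "eventually (\<lambda>q. bproj E (f q) = src Gr (g q)) G"
    and C: "eventually (\<lambda>q. bnorm A (ainv A (\<sigma> (ginv Gr (g q)) (g q))) \<le> C) G"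
    and e0: "bproj E e0 = tgt Gr g0"
  shows "((\<lambda>q. T_inverse (g q) (e q)) \<longlongrightarrow> T_inverse g0 e0) G"
proof -
  let ?f0 = "T_inverse g0 e0" and ?d = "\<lambda>q. bsub E (e q) (T (g q) (f q))"
  have f0: "bproj E ?f0 = src Gr g0" "T g0 ?f0 = e0"
    using T_inverse_spec[of e0 g0] e0 by (auto simp: mem_fib_iff)
  have Tf_fib: "eventually (\<lambda>q. bproj E (T (g q) (f q)) = tgt Gr (g q)) G"
    using f_fib by eventually_elim (metis T_mem mem_fib_iff)
  have d_fib: "eventually (\<lambda>q. bproj E (?d q) = tgt Gr (g q)) G"
    using e_fib Tf_fib by eventually_elim (simp add: bundle_proj_bsub[OF bundle_E])
  have "((\<lambda>q. T (g q) (f q)) \<longlongrightarrow> e0) G"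
    using tendsto_T[OF g f f_fib] f0 by simp
  then have "((\<lambda>q. bnorm E (?d q)) \<longlongrightarrow> 0) G"
    using e_fib Tf_fib by (intro bundle_norm_sub_tendsto_0[OF bundle_E e]) (auto elim: eventually_elim2)
  then have "((\<lambda>q. bnorm E (T (ginv Gr (g q)) (?d q))) \<longlongrightarrow> 0) G"
    using d_fib by (intro norm_T_tendsto_0[OF tendsto_ginv[OF groupoid g]]) auto
  then have bound_0: "((\<lambda>q. 2 * C * bnorm E (T (ginv Gr (g q)) (?d q))) \<longlongrightarrow> 0) G"
    using tendsto_mult_right_zero by blast
  have "eventually (\<lambda>q. bnorm E (bsub E (T_inverse (g q) (e q)) (f q))
      \<le> 2 * C * bnorm E (T (ginv Gr (g q)) (?d q))) G"
    using e_fib f_fib C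
  proof eventually_elim
    case (elim q)
    then have eq: "e q \<in> fib E (tgt Gr (g q))" and fq: "f q \<in> fib E (src Gr (g q))"
      by (simp_all add: mem_fib_iff)
    have "bsub E (T_inverse (g q) (e q)) (f q) = T_inverse (g q) (?d q)"
      using T_inverse_bsub[OF eq T_mem[OF fq]] T_inverse_T[OF fq] by simp
    moreover have "?d q \<in> fib E (tgt Gr (g q))"
      using eq T_mem[OF fq] banach_fiber_space.sub_mem[OF banach_bundle_fiber_space[OF bundle_E]] by blast
    ultimately show ?case
      using norm_T_inverse_le[of "?d q" "g q"] elim(3) by (smt (verit) mult_right_mono norm_E_nonneg)
  qed
  then have "((\<lambda>q. bnorm E (bsub E (T_inverse (g q) (e q)) (f q))) \<longlongrightarrow> 0) G"
    by (intro tendsto_sandwich[OF _ _ tendsto_const bound_0]) auto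
  moreover have "eventually (\<lambda>q. bproj E (T_inverse (g q) (e q)) = bproj E (f q)) G"
    using e_fib f_fib by eventually_elim (metis T_inverse_mem mem_fib_iff)
  ultimately show ?thesis by (intro bundle_tendsto_of_norm_sub[OF bundle_E f])
qed

lemma continuous_T_inverse:
  "continuous_on {(g, e). bproj E e = tgt Gr g} (\<lambda>(g, e). (g, T_inverse g e))"
  unfolding continuous_on_def
proof (intro ballI)
  let ?D = "{(g, e). bproj E e = tgt Gr g}"
  fix z0 assume "z0 \<in> ?D"
  then obtain g0 e0 where z0: "z0 = (g0, e0)" and e0: "bproj E e0 = tgt Gr g0" by auto
  let ?F = "at z0 within ?D" and ?f0 = "T_inverse g0 e0"
  have g: "(fst \<longlongrightarrow> g0) ?F" and e: "(snd \<longlongrightarrow> e0) ?F"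
    using tendsto_fst[OF tendsto_ident_at] tendsto_snd[OF tendsto_ident_at] z0 by auto
  have D: "eventually (\<lambda>z. z \<in> ?D) ?F" by (simp add: eventually_at_filter)
  obtain C where C: "eventually (\<lambda>z. bnorm A (ainv A (\<sigma> (ginv Gr (fst z)) (fst z))) \<le> C) ?F"
    using ainv_sigma_eventually_bounded[OF g] by blast
  have \<phi>: "((\<lambda>z. src Gr (fst z)) \<longlongrightarrow> bproj E ?f0) ?F"
    using tendsto_src[OF groupoid g] T_inverse_mem[of e0 g0] e0 by (simp add: mem_fib_iff)
  let ?G = "fiber_lift_filter E ?F (\<lambda>z. src Gr (fst z)) ?f0"
  have "((\<lambda>q. T_inverse (fst (fst q)) (snd (fst q))) \<longlongrightarrow> ?f0) ?G"
  proof (rule tendsto_T_inverse_along_lifts)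
    show "((\<lambda>q. fst (fst q)) \<longlongrightarrow> g0) ?G" by (rule tendsto_fiber_lift_filter_fst[OF g])
    show "((\<lambda>q. snd (fst q)) \<longlongrightarrow> e0) ?G" by (rule tendsto_fiber_lift_filter_fst[OF e])
    show "(snd \<longlongrightarrow> ?f0) ?G" by (rule tendsto_fiber_lift_filter_snd)
    show "eventually (\<lambda>q. bproj E (snd (fst q)) = tgt Gr (fst (fst q))) ?G"
      using eventually_fiber_lift_filter_fst[OF D] by (simp add: case_prod_beta)
    show "eventually (\<lambda>q. bproj E (snd q) = src Gr (fst (fst q))) ?G"
      by (rule eventually_fiber_lift_filter_proj)
    show "eventually (\<lambda>q. bnorm A (ainv A (\<sigma> (ginv Gr (fst (fst q))) (fst (fst q)))) \<le> C) ?G"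
      by (rule eventually_fiber_lift_filter_fst[OF C])
  qed (rule e0)
  then have "((\<lambda>z. T_inverse (fst z) (snd z)) \<longlongrightarrow> ?f0) ?F"
    unfolding tendsto_def
    by (auto intro: eventually_fiber_lift_filter_fstD[OF bundle_E \<phi>])
  then have "((\<lambda>z. (fst z, T_inverse (fst z) (snd z))) \<longlongrightarrow> (g0, ?f0)) ?F"
    using g by (intro tendsto_Pair)
  then show "((\<lambda>(g, e). (g, T_inverse g e)) \<longlongrightarrow> (\<lambda>(g, e). (g, T_inverse g e)) z0) ?F"
    using z0 by (simp add: case_prod_beta')
qed

lemma T_inverse_pullback_morphism: "pullback_morphism E E (tgt Gr) (src Gr) T_inverse"
  unfolding pullback_morphism_def using T_inverse_bounded_linear continuous_T_inverse by blast

end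

theorem mainTheorem3:
  fixes Gr :: "('g::t2_space, 'x::topological_space) groupoid"
    and \<mu> :: "'x \<Rightarrow> 'g measure"
    and A :: "('x, 'a::t2_space) babundle"
    and act :: "'g \<Rightarrow> 'a \<Rightarrow> 'a"
    and E :: "('x, 'e::t2_space) bbundle"
    and m :: "'a \<Rightarrow> 'e \<Rightarrow> 'e"
    and \<sigma> :: "'g \<Rightarrow> 'g \<Rightarrow> 'a"
    and T :: "'g \<Rightarrow> 'e \<Rightarrow> 'e"
  assumes "locally_compact_groupoid Gr \<mu>"
    and "algebra_G_bundle Gr A act"
    and "module_bundle A E m"
    and "multiplier Gr A act \<sigma>"
    and "A_linear Gr A E act m T"
    and "almost_representation Gr A E m \<sigma> T"
  shows "\<exists>Tinv. pullback_morphism E E (tgt Gr) (src Gr) Tinv \<and>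
           (\<forall>g. \<forall>e\<in>fib E (src Gr g). Tinv g (T g e) = e) \<and>
           (\<forall>g. \<forall>e\<in>fib E (tgt Gr g). T g (Tinv g e) = e) \<and>
           (\<forall>g. opnorm E E (tgt Gr g) (Tinv g)
                  \<le> bound Gr A E \<sigma> T (tgt Gr g) / (1 - defect Gr A E m \<sigma> T (tgt Gr g)))"
proof -
  interpret almost_representation_setting Gr \<mu> A act E m \<sigma> T
    using assms by unfold_locales
  show ?thesis
    using T_inverse_pullback_morphism T_inverse_T T_T_inverse opnorm_T_inverse_le by blast
qed

end
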